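(* Let $N\geq 1$, let $U\in M_{2N}(\mathbb{C})$ be unitary with $U^{\rm T}=-U$, and let $\Phi^U_{4N}$ be the map defined on block matrices $X=\begin{pmatrix} X_{11} & X_{12}\\ X_{21} & X_{22}\end{pmatrix}$ ($X_{kl}\in M_{2N}(\mathbb{C})$) by $$\Phi^U_{4N}(X)=\frac{1}{2N}\begin{pmatrix} \mathbb{I}_{2N}\,\mathrm{Tr}X_{22} & -\big(X_{12}+UX_{21}^{\rm T}U^\dagger\big)\\ -\big(X_{21}+UX_{12}^{\rm T}U^\dagger\big) & \mathbb{I}_{2N}\,\mathrm{Tr}X_{11}\end{pmatrix}.$$ For $p\in(0,1)$ let $\widetilde{\Phi}_p(X)=p\,\frac{\mathbb{I}_{4N}}{4N}\mathrm{Tr}X+(1-p)\Phi^U_{4N}(X)$. Then the smallest $p\in(0,1)$ for which $\widetilde{\Phi}_p$ is completely positive is $p=\frac{4N}{4N+1}$, and for this $p$ the map $\widetilde{\Phi}_p$ (the structural physical approximation of $\Phi^U_{4N}$) is entanglement breaking; equivalently, $\widetilde{W}=\frac{p}{(4N)^2}\mathbb{I}_{4N}\otimes\mathbb{I}_{4N}+(1-p)(\mathrm{id}\otimes\Phi^U_{4N})P^+_{4N}$ with $p=\frac{4N}{4N+1}$ is a separable state.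
   Context: $P^+_{4N}=\frac{1}{4N}\sum_{k,l=1}^{4N}|k\rangle\langle l|\otimes|k\rangle\langle l|$ with $\{|k\rangle\}$ the standard basis of $\mathbb{C}^{4N}$. A completely positive map $\Lambda$ is entanglement breaking if $(\mathrm{id}\otimes\Lambda)\rho$ is separable for every state $\rho$; equivalently its Choi matrix $(\mathrm{id}\otimes\Lambda)P^+$ is separable. *)

theory Defs
  imports Complex_Main "Jordan_Normal_Form.Matrix"
begin

definition mtrace :: "complex mat \<Rightarrow> complex" where
  "mtrace A = (\<Sum>i<dim_row A. A $$ (i,i))"

definition adj :: "complex mat \<Rightarrow> complex mat" where
  "adj A = mat (dim_col A) (dim_row A) (\<lambda>(i,j). cnj (A $$ (j,i)))"

definition psd :: "nat \<Rightarrow> complex mat \<Rightarrow> bool" where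
  "psd n A \<longleftrightarrow> A \<in> carrier_mat n n \<and> adj A = A \<and>
     (\<forall>v \<in> carrier_vec n. 0 \<le> Re (\<Sum>i<n. \<Sum>j<n. cnj (v $ i) * A $$ (i,j) * v $ j))"

definition is_state :: "nat \<Rightarrow> complex mat \<Rightarrow> bool" where
  "is_state n \<rho> \<longleftrightarrow> psd n \<rho> \<and> mtrace \<rho> = 1"

definition kron :: "complex mat \<Rightarrow> complex mat \<Rightarrow> complex mat" where
  "kron A B = mat (dim_row A * dim_row B) (dim_col A * dim_col B)
     (\<lambda>(i,j). A $$ (i div dim_row B, j div dim_col B) * B $$ (i mod dim_row B, j mod dim_col B))"

definition blk :: "nat \<Rightarrow> complex mat \<Rightarrow> nat \<Rightarrow> nat \<Rightarrow> complex mat" where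
  "blk n X a b = mat n n (\<lambda>(i,j). X $$ (a*n + i, b*n + j))"

(* (id_k \<otimes> \<Phi>) X = \<Sum>_{a,b<k} |a><b| \<otimes> \<Phi>(X_ab), for \<Phi> acting on n x n matrices *)
definition id_tensor :: "nat \<Rightarrow> nat \<Rightarrow> (complex mat \<Rightarrow> complex mat) \<Rightarrow> complex mat \<Rightarrow> complex mat" where
  "id_tensor k n \<Phi> X = mat (k*n) (k*n)
     (\<lambda>(i,j). \<Phi> (blk n X (i div n) (j div n)) $$ (i mod n, j mod n))"

definition positive_map :: "nat \<Rightarrow> (complex mat \<Rightarrow> complex mat) \<Rightarrow> bool" where
  "positive_map n \<Phi> \<longleftrightarrow> (\<forall>X. psd n X \<longrightarrow> psd n (\<Phi> X))"

definition completely_positive :: "nat \<Rightarrow> (complex mat \<Rightarrow> complex mat) \<Rightarrow> bool" where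
  "completely_positive n \<Phi> \<longleftrightarrow> (\<forall>k. positive_map (k*n) (id_tensor k n \<Phi>))"

definition is_separable :: "nat \<Rightarrow> nat \<Rightarrow> complex mat \<Rightarrow> bool" where
  "is_separable k n \<rho> \<longleftrightarrow> \<rho> \<in> carrier_mat (k*n) (k*n) \<and>
     (\<exists>(m::nat) A B. (\<forall>t<m. psd k (A t) \<and> psd n (B t)) \<and>
        (\<forall>i<k*n. \<forall>j<k*n. \<rho> $$ (i,j) = (\<Sum>t<m. kron (A t) (B t) $$ (i,j))))"

definition entanglement_breaking :: "nat \<Rightarrow> (complex mat \<Rightarrow> complex mat) \<Rightarrow> bool" where
  "entanglement_breaking n \<Lambda> \<longleftrightarrow> completely_positive n \<Lambda> \<and>
     (\<forall>k \<rho>. is_state (k*n) \<rho> \<longrightarrow> is_separable k n (id_tensor k n \<Lambda> \<rho>))"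

(* maximally entangled state P^+_n = (1/n) \<Sum>_{k,l} |k><l| \<otimes> |k><l| *)
definition Pplus :: "nat \<Rightarrow> complex mat" where
  "Pplus n = mat (n*n) (n*n) (\<lambda>(i,j).
     if i div n = i mod n \<and> j div n = j mod n then 1 / of_nat n else 0)"

definition PhiU :: "nat \<Rightarrow> complex mat \<Rightarrow> complex mat \<Rightarrow> complex mat" where
  "PhiU N U X = (let m = 2*N;
       X11 = blk m X 0 0; X12 = blk m X 0 1; X21 = blk m X 1 0; X22 = blk m X 1 1 in
     (1 / of_nat m) \<cdot>\<^sub>m four_block_mat
        (mtrace X22 \<cdot>\<^sub>m 1\<^sub>m m)
        (- (X12 + U * transpose_mat X21 * adj U))
        (- (X21 + U * transpose_mat X12 * adj U))
        (mtrace X11 \<cdot>\<^sub>m 1\<^sub>m m))"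

definition PhiTilde :: "nat \<Rightarrow> complex mat \<Rightarrow> real \<Rightarrow> complex mat \<Rightarrow> complex mat" where
  "PhiTilde N U p X =
     (complex_of_real p * mtrace X / of_nat (4*N)) \<cdot>\<^sub>m 1\<^sub>m (4*N)
     + complex_of_real (1 - p) \<cdot>\<^sub>m PhiU N U X"

end

theory Submission
  imports Defs
begin

text \<open>At \<open>p\<^sub>0 = 4N/(4N+1)\<close> the trace terms cancel: \<open>PhiTilde p\<^sub>0 = (1 - p\<^sub>0) K\<close> with
  \<open>K = Tr(\<cdot>) I + PhiU\<close>. The map \<open>K\<close> has an explicit measure-and-prepare form
  \<open>K X = \<Sum>\<^sub>t w\<^sub>t \<langle>m\<^sub>t|X|m\<^sub>t\<rangle> |y\<^sub>t\<rangle>\<langle>y\<^sub>t|\<close> with \<open>w\<^sub>t \<ge> 0\<close>; every such map is completely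
  positive and entanglement breaking, and \<open>W\<close> is the Choi state of \<open>PhiTilde p\<^sub>0\<close>, hence separable.
  For general \<open>p\<close> one has \<open>PhiTilde p = (p/4N - (1 - p)) Tr(\<cdot>) I + (1 - p) K\<close>, and every
  measured vector \<open>m\<^sub>t\<close> is orthogonal to the conjugate of the prepared \<open>y\<^sub>t\<close>, so \<open>K\<close> contributes
  nothing to the overlap of the Choi matrix with \<open>\<Sum>\<^sub>a |aa\<rangle>\<close>. That overlap is therefore
  \<open>p/4N - (1 - p)\<close>, which is negative for \<open>p < p\<^sub>0\<close>.\<close>

section \<open>Finite sums, block matrices and quadratic forms\<close>

lemma sum_lessThan_mult_blocks:
  fixes f :: "nat \<Rightarrow> 'b::comm_monoid_add"
  shows "(\<Sum>I<k*n. f I) = (\<Sum>a<k. \<Sum>i<n. f (a*n+i))"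
proof (induction k)
  case 0 then show ?case by simp
next
  case (Suc k)
  have "(\<Sum>I<Suc k*n. f I) = (\<Sum>I<k*n. f I) + (\<Sum>I\<in>{k*n..<k*n+n}. f I)"
    by (simp add: add.commute lessThan_atLeast0 sum.atLeastLessThan_concat)
  also have "(\<Sum>I\<in>{k*n..<k*n+n}. f I) = (\<Sum>i<n. f (k*n+i))"
    using sum.shift_bounds_nat_ivl[where m=0 and k="k*n" and n=n and g=f]
    by (simp add: lessThan_atLeast0 add.commute)
  finally show ?case using Suc by simp
qed

lemma block_index_less: "a < k \<Longrightarrow> i < n \<Longrightarrow> a*n+i < k*(n::nat)"
proof -
  assume "a < k" "i < n"
  then have "a*n+i < (a+1)*n" by simp
  also have "\<dots> \<le> k*n" using \<open>a<k\<close> by (intro mult_right_mono) auto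
  finally show ?thesis .
qed

lemma nat_eq_iff_div_mod_eq: "(I::nat) = J \<longleftrightarrow> I div n = J div n \<and> I mod n = J mod n"
  by (metis div_mult_mod_eq)

lemma sum_sum_cong: "(\<And>i j. i < (m::nat) \<Longrightarrow> j < m \<Longrightarrow> f i j = g i j)
    \<Longrightarrow> (\<Sum>i<m. \<Sum>j<m. f i j) = (\<Sum>i<m. \<Sum>j<m. g i j :: complex)"
  by (intro sum.cong refl) auto

lemma sum_sum_if_fst: "r < (m::nat) \<Longrightarrow> (\<Sum>i<m. \<Sum>j<m. if i = r then g j else 0)
    = (\<Sum>j<m. g j :: complex)"
proof -
  assume "r < m"
  have "(\<Sum>i<m. \<Sum>j<m. if i = r then g j else 0) = (\<Sum>i<m. if i = r then (\<Sum>j<m. g j) else 0)"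
    by (intro sum.cong refl) auto
  also have "\<dots> = (\<Sum>j<m. g j)" using \<open>r < m\<close> by simp
  finally show ?thesis .
qed

lemma sum_sum_if_snd: "r < (m::nat) \<Longrightarrow> (\<Sum>i<m. \<Sum>j<m. if j = r then g i else 0)
    = (\<Sum>i<m. g i :: complex)"
  by (simp add: sum.swap[of _ "{..<m}" "{..<m}"] sum_sum_if_fst)

lemma sum_sum_if_both: "r < (m::nat) \<Longrightarrow> s < m \<Longrightarrow>
    (\<Sum>i<m. \<Sum>j<m. if i = r \<and> j = s then x else 0) = (x :: complex)"
proof -
  assume "r < m" "s < m"
  have "(\<Sum>i<m. \<Sum>j<m. if i = r \<and> j = s then x else 0)
      = (\<Sum>i<m. \<Sum>j<m. if i = r then (if j = s then x else 0) else 0)"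
    by (intro sum.cong refl) auto
  also have "\<dots> = x"
    using sum_sum_if_fst[OF \<open>r<m\<close>, of "\<lambda>j. if j = s then x else 0"] \<open>s<m\<close> by simp
  finally show ?thesis .
qed

lemma sum_if_eq_zero: "p < (m::nat) \<Longrightarrow> (\<Sum>j<m. if p = j then 0 else X j)
    = (\<Sum>j<m. X j) - (X p :: complex)"
proof -
  assume p: "p < m"
  have "(\<Sum>j<m. X j) = (\<Sum>j<m. if p = j then 0 else X j) + (\<Sum>j<m. if p = j then X j else 0)"
    by (subst sum.distrib[symmetric]) (intro sum.cong refl, simp)
  also have "(\<Sum>j<m. if p = j then X j else 0) = X p" using p by simp
  finally show ?thesis by simp
qed

lemma sum_if_diag: "(\<Sum>p<m. if r = p \<and> s = p then g p else 0)
    = (if r = s \<and> r < (m::nat) then g r else (0::complex))"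
proof (cases "r = s")
  case True then show ?thesis by simp
next
  case False
  then have "(\<Sum>p<m. if r = p \<and> s = p then g p else 0) = (\<Sum>p<m. 0)" by (intro sum.cong refl) auto
  then show ?thesis using False by simp
qed

lemma sum_mult_if_diag:
  "(\<Sum>p<m. y p * (if r = p \<and> s = p then 1 else 0))
      = (if r = s \<and> r < (m::nat) then y r else (0::complex))"
  by (subst sum_if_diag[symmetric]) (rule sum.cong; simp)

lemma sum_if_left: "(\<Sum>j\<in>A. if P then g j else 0)
    = (if P then \<Sum>j\<in>A. g j else (0::'a::comm_monoid_add))"
  by simp

lemma sum_sum_sum_swap: "(\<Sum>a\<in>A. \<Sum>b\<in>B. \<Sum>t\<in>C. f a b t)
    = (\<Sum>t\<in>C. \<Sum>a\<in>A. \<Sum>b\<in>B. (f a b t :: complex))"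
proof -
  have "(\<Sum>a\<in>A. \<Sum>b\<in>B. \<Sum>t\<in>C. f a b t)
      = (\<Sum>a\<in>A. \<Sum>t\<in>C. \<Sum>b\<in>B. f a b t)"
    by (rule sum.cong[OF refl]) (rule sum.swap)
  also have "\<dots> = (\<Sum>t\<in>C. \<Sum>a\<in>A. \<Sum>b\<in>B. f a b t)" by (rule sum.swap)
  finally show ?thesis .
qed

lemma sum_sum_scaled_diag: assumes "0 < (n::nat)"
  shows "(\<Sum>a<n. \<Sum>b<n. C * (if a = b then 1 / of_nat n else 0)) = (C::complex)"
proof -
  have "(\<Sum>a<n. \<Sum>b<n. C * (if a = b then 1 / of_nat n else 0))
      = (\<Sum>a<n. \<Sum>b<n. if a = b then C / of_nat n else 0)"
    by (intro sum.cong refl) simp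
  also have "\<dots> = (\<Sum>a<n. C / of_nat n)" by (intro sum.cong refl) simp
  also have "\<dots> = C" using assms by simp
  finally show ?thesis .
qed

definition qform :: "nat \<Rightarrow> complex mat \<Rightarrow> (nat \<Rightarrow> complex) \<Rightarrow> complex" where
  "qform n X v = (\<Sum>k<n. \<Sum>l<n. cnj (v k) * X $$ (k,l) * v l)"

lemma index_blk: "i < n \<Longrightarrow> j < n \<Longrightarrow> blk n X a b $$ (i,j) = X $$ (a*n+i, b*n+j)"
  by (simp add: blk_def)

lemma blk_carrier_mat[simp]: "blk n X a b \<in> carrier_mat n n"
  by (simp add: blk_def)

lemma dim_blk[simp]: "dim_row (blk n X a b) = n" "dim_col (blk n X a b) = n"
  by (simp_all add: blk_def)

lemma index_id_tensor:
  "I < k*n \<Longrightarrow> J < k*n \<Longrightarrow> id_tensor k n \<Phi> X $$ (I,J)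
      = \<Phi> (blk n X (I div n) (J div n)) $$ (I mod n, J mod n)"
  "id_tensor k n \<Phi> X \<in> carrier_mat (k*n) (k*n)"
  unfolding id_tensor_def by auto

lemma psd_hermitian: "psd n X \<Longrightarrow> i < n \<Longrightarrow> j < n \<Longrightarrow> X $$ (j,i) = cnj (X $$ (i,j))"
proof -
  assume p: "psd n X" and ij: "i < n" "j < n"
  then have c: "X \<in> carrier_mat n n" and a: "adj X = X" unfolding psd_def by auto
  have "adj X $$ (j,i) = cnj (X $$ (i,j))" using c ij unfolding adj_def by auto
  then show ?thesis using a by simp
qed

lemma psd_qform_nonneg: "psd n X \<Longrightarrow> 0 \<le> Re (qform n X v)"
proof -
  assume p: "psd n X"
  have "vec n v \<in> carrier_vec n" by simp
  then have "0 \<le> Re (\<Sum>i<n. \<Sum>j<n. cnj (vec n v $ i) * X $$ (i,j) * vec n v $ j)"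
    using p unfolding psd_def by blast
  also have "(\<Sum>i<n. \<Sum>j<n. cnj (vec n v $ i) * X $$ (i,j) * vec n v $ j) = qform n X v"
    unfolding qform_def by (intro sum.cong refl) simp
  finally show ?thesis .
qed

lemma qform_eq_sum_mult_sum: "qform n Y v = (\<Sum>k<n. cnj (v k) * (\<Sum>l<n. Y $$ (k,l) * v l))"
  unfolding qform_def by (simp add: sum_distrib_left mult_ac)

lemma qform_product_vector:
  shows "qform (k*n) X (\<lambda>I. c (I div n) * m (I mod n)) =
    (\<Sum>a<k. \<Sum>b<k. cnj (c a) * c b * qform n (blk n X a b) m)"
proof -
  have "qform (k*n) X (\<lambda>I. c (I div n) * m (I mod n)) =
     (\<Sum>a<k. \<Sum>i<n. \<Sum>b<k. \<Sum>j<n. cnj (c a * m i) * X $$ (a*n+i, b*n+j) * (c b * m j))"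
    unfolding qform_def sum_lessThan_mult_blocks by (intro sum.cong refl) (simp)
  also have "\<dots> = (\<Sum>a<k. \<Sum>b<k. \<Sum>i<n. \<Sum>j<n. cnj (c a * m i) * X $$ (a*n+i, b*n+j)
      * (c b * m j))"
    by (rule sum.cong[OF refl]) (rule sum.swap)
  also have "\<dots> = (\<Sum>a<k. \<Sum>b<k. cnj (c a) * c b * qform n (blk n X a b) m)"
    unfolding qform_def
    by (intro sum.cong refl) (simp add: index_blk sum_distrib_left mult_ac)
  finally show ?thesis .
qed

lemma cnj_qform_blk:
  assumes p: "psd (k*n) X" and ab: "a < k" "b < k"
  shows "cnj (qform n (blk n X a b) m) = qform n (blk n X b a) m"
proof -
  have "cnj (qform n (blk n X a b) m) = (\<Sum>i<n. \<Sum>j<n. m i * cnj (X $$ (a*n+i, b*n+j)) * cnj (m j))"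
    unfolding qform_def by (simp add: index_blk)
  also have "\<dots> = (\<Sum>i<n. \<Sum>j<n. m i * X $$ (b*n+j, a*n+i) * cnj (m j))"
  proof (intro sum.cong refl)
    fix i j assume "i \<in> {..<n}" "j \<in> {..<n}"
    then have "a*n+i < k*n" "b*n+j < k*n" using ab by (auto intro: block_index_less)
    then show "m i * cnj (X $$ (a*n+i, b*n+j)) * cnj (m j) = m i * X $$ (b*n+j, a*n+i) * cnj (m j)"
      using psd_hermitian[OF p, of "a*n+i" "b*n+j"] by simp
  qed
  also have "\<dots> = qform n (blk n X b a) m"
    unfolding qform_def by (subst sum.swap) (intro sum.cong refl, simp add: index_blk mult.commute)
  finally show ?thesis .
qed

lemma psd_outer_product: "psd n (mat n n (\<lambda>(i,j). y i * cnj (y j)))"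
proof -
  let ?B = "mat n n (\<lambda>(i,j). y i * cnj (y j))"
  have car: "?B \<in> carrier_mat n n" by simp
  have adj: "adj ?B = ?B" by (rule eq_matI) (auto simp: adj_def)
  have "0 \<le> Re (\<Sum>i<n. \<Sum>j<n. cnj (v $ i) * ?B $$ (i,j) * v $ j)" for v :: "complex vec"
  proof -
    define s where "s = (\<Sum>i<n. cnj (v $ i) * y i)"
    have "(\<Sum>i<n. \<Sum>j<n. cnj (v $ i) * ?B $$ (i,j) * v $ j) = s * cnj s"
      unfolding s_def by (simp add: sum_distrib_left sum_distrib_right mult_ac, rule sum.swap)
    also have "\<dots> = complex_of_real ((Re s)\<^sup>2 + (Im s)\<^sup>2)" by (rule complex_mult_cnj)
    finally show ?thesis by simp
  qed
  then show ?thesis unfolding psd_def using car adj by blast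
qed

lemma psd_scaled_qform_blk_matrix:
  assumes p: "psd (k*n) X" and w: "0 \<le> c"
  shows "psd k (complex_of_real c \<cdot>\<^sub>m mat k k (\<lambda>(a,b). qform n (blk n X a b) m))"
proof -
  let ?A = "complex_of_real c \<cdot>\<^sub>m mat k k (\<lambda>(a,b). qform n (blk n X a b) m)"
  have car: "?A \<in> carrier_mat k k" by simp
  have adj: "adj ?A = ?A" by (rule eq_matI) (auto simp: adj_def cnj_qform_blk[OF p])
  have "0 \<le> Re (\<Sum>a<k. \<Sum>b<k. cnj (v $ a) * ?A $$ (a,b) * v $ b)" for v :: "complex vec"
  proof -
    have "(\<Sum>a<k. \<Sum>b<k. cnj (v $ a) * ?A $$ (a,b) * v $ b)
       = complex_of_real c * (\<Sum>a<k. \<Sum>b<k. cnj (v $ a) * v $ b * qform n (blk n X a b) m)"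
      by (simp add: sum_distrib_left mult_ac)
    also have "\<dots> = complex_of_real c * qform (k*n) X (\<lambda>I. v $ (I div n) * m (I mod n))"
      by (simp add: qform_product_vector)
    finally show ?thesis using psd_qform_nonneg[OF p] w by simp
  qed
  then show ?thesis unfolding psd_def using car adj by blast
qed

lemma index_mult_mat_sum:
  assumes "A \<in> carrier_mat a b" "B \<in> carrier_mat b c" "i < a" "j < c"
  shows "(A * B) $$ (i,j) = (\<Sum>k<b. A $$ (i,k) * B $$ (k,j))"
proof -
  have d: "dim_row A = a" "dim_col A = b" "dim_row B = b" "dim_col B = c" using assms(1,2) by auto
  have "(A * B) $$ (i,j) = row A i \<bullet> col B j" using d assms(3,4) by simp
  also have "\<dots> = (\<Sum>k\<in>{0..<b}. row A i $ k * col B j $ k)" unfolding scalar_prod_def using d by simp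
  also have "\<dots> = (\<Sum>k<b. A $$ (i,k) * B $$ (k,j))" unfolding lessThan_atLeast0[symmetric]
    by (intro sum.cong refl) (use d assms(3,4) in simp)
  finally show ?thesis .
qed

lemma adj_carrier_mat: "U \<in> carrier_mat m m \<Longrightarrow> adj U \<in> carrier_mat m m"
  unfolding adj_def carrier_mat_def by simp

lemma index_adj: "U \<in> carrier_mat m m \<Longrightarrow> i < m \<Longrightarrow> j < m \<Longrightarrow>
    adj U $$ (i,j) = cnj (U $$ (j,i))"
  unfolding adj_def carrier_mat_def by simp

lemma index_conjugate_by:
  assumes U: "U \<in> carrier_mat m m" and T: "T \<in> carrier_mat m m" and rs: "r < m" "s < m"
  shows "(U * T * adj U) $$ (r,s) = (\<Sum>q<m. (\<Sum>p<m. U $$ (r,p) * T $$ (p,q)) * cnj (U $$ (s,q)))"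
proof -
  have UT: "U * T \<in> carrier_mat m m" using U T by simp
  have "(U * T * adj U) $$ (r,s) = (\<Sum>q<m. (U * T) $$ (r,q) * adj U $$ (q,s))"
    by (rule index_mult_mat_sum[OF UT adj_carrier_mat[OF U] rs])
  also have "\<dots> = (\<Sum>q<m. (\<Sum>p<m. U $$ (r,p) * T $$ (p,q)) * cnj (U $$ (s,q)))"
    by (intro sum.cong refl) (simp add: index_mult_mat_sum[OF U T rs(1)] index_adj[OF U] rs)
  finally show ?thesis .
qed

lemma unitary_row_orthonormal:
  assumes "U \<in> carrier_mat m m" "U * adj U = 1\<^sub>m m" "r < m" "s < m"
  shows "(\<Sum>p<m. U $$ (r,p) * cnj (U $$ (s,p))) = (if r = s then 1 else 0)"
proof -
  have "(U * adj U) $$ (r,s) = (\<Sum>p<m. U $$ (r,p) * cnj (U $$ (s,p)))"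
    using assms(1,3,4) by (simp add: adj_def scalar_prod_def lessThan_atLeast0)
  then show ?thesis using assms(2-4) by simp
qed

lemma antisym_index:
  fixes U :: "complex mat"
  assumes "U \<in> carrier_mat m m" "transpose_mat U = - U" "p < m" "r < m"
  shows "U $$ (p,r) = - U $$ (r,p)"
proof -
  have "transpose_mat U $$ (r,p) = (- U) $$ (r,p)" using assms(2) by simp
  then show ?thesis using assms(1,3,4) by simp
qed

lemma antisym_diag_zero:
  fixes U :: "complex mat"
  assumes "U \<in> carrier_mat m m" "transpose_mat U = - U" "p < m"
  shows "U $$ (p,p) = 0"
  using antisym_index[OF assms(1,2,3,3)] by simp

lemma antisym_unitary_col_norm:
  assumes "U \<in> carrier_mat m m" "U * adj U = 1\<^sub>m m" "transpose_mat U = - U" "r < m"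
  shows "(\<Sum>p<m. cnj (U $$ (p,r)) * U $$ (p,r)) = 1"
proof -
  have "(\<Sum>p<m. cnj (U $$ (p,r)) * U $$ (p,r)) = (\<Sum>p<m. U $$ (r,p) * cnj (U $$ (r,p)))"
    by (intro sum.cong refl) (simp add: antisym_index[OF assms(1,3) _ assms(4)])
  also have "\<dots> = 1" using unitary_row_orthonormal[OF assms(1,2,4,4)] by simp
  finally show ?thesis .
qed

section \<open>Measure-and-prepare maps\<close>

text \<open>Entrywise form of \<open>\<Phi> X = \<Sum>\<^sub>t\<^sub>\<in>\<^sub>S wt t \<cdot> \<langle>mv t|X|mv t\<rangle> \<cdot> |yv t\<rangle>\<langle>yv t|\<close>.\<close>

definition measure_prepare :: "nat \<Rightarrow> 'a set \<Rightarrow> ('a \<Rightarrow> real) \<Rightarrow> ('a \<Rightarrow> nat \<Rightarrow> complex) \<Rightarrow>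
    ('a \<Rightarrow> nat \<Rightarrow> complex) \<Rightarrow> (complex mat \<Rightarrow> complex mat) \<Rightarrow> bool" where
  "measure_prepare n S wt mv yv \<Phi> \<longleftrightarrow> finite S \<and> (\<forall>t\<in>S. 0 \<le> wt t) \<and>
    (\<forall>X\<in>carrier_mat n n. \<Phi> X \<in> carrier_mat n n \<and>
      (\<forall>i<n. \<forall>j<n. \<Phi> X $$ (i,j)
          = (\<Sum>t\<in>S. complex_of_real (wt t) * qform n X (mv t) * yv t i * cnj (yv t j))))"

lemma index_id_tensor_measure_prepare:
  assumes "measure_prepare n S wt mv yv \<Phi>" "I < k*n" "J < k*n"
  shows "id_tensor k n \<Phi> X $$ (I,J) = (\<Sum>t\<in>S. complex_of_real (wt t) *
     qform n (blk n X (I div n) (J div n)) (mv t) * yv t (I mod n) * cnj (yv t (J mod n)))"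
proof -
  have n: "n > 0" using assms(2) by (cases n) auto
  then show ?thesis using assms unfolding measure_prepare_def by (simp add: index_id_tensor)
qed

lemma qform_id_tensor_rank_one:
  fixes v :: "complex vec"
  shows "(\<Sum>I<k*n. \<Sum>J<k*n. cnj (v $ I)
      * (qform n (blk n X (I div n) (J div n)) m * y (I mod n) * cnj (y (J mod n))) * v $ J)
    = qform (k*n) X (\<lambda>I. (\<Sum>j<n. cnj (y j) * v $ ((I div n)*n + j)) * m (I mod n))"
proof -
  define c where "c a = (\<Sum>j<n. cnj (y j) * v $ (a*n + j))" for a
  have "(\<Sum>I<k*n. \<Sum>J<k*n. cnj (v $ I)
      * (qform n (blk n X (I div n) (J div n)) m * y (I mod n) * cnj (y (J mod n))) * v $ J)
     = (\<Sum>a<k. \<Sum>i<n. \<Sum>b<k. \<Sum>j<n. cnj (v $ (a*n+i))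
         * (qform n (blk n X a b) m * y i * cnj (y j)) * v $ (b*n+j))"
    unfolding sum_lessThan_mult_blocks by (intro sum.cong refl) simp
  also have "\<dots> = (\<Sum>a<k. \<Sum>b<k. \<Sum>i<n. \<Sum>j<n. cnj (v $ (a*n+i))
      * (qform n (blk n X a b) m * y i * cnj (y j)) * v $ (b*n+j))"
    by (rule sum.cong[OF refl]) (rule sum.swap)
  also have "\<dots> = (\<Sum>a<k. \<Sum>b<k. cnj (c a) * c b * qform n (blk n X a b) m)"
    unfolding c_def
    by (intro sum.cong refl) (simp add: sum_distrib_left sum_distrib_right cnj_sum mult_ac, rule sum.swap)
  also have "\<dots> = qform (k*n) X (\<lambda>I. c (I div n) * m (I mod n))"
    by (rule qform_product_vector[symmetric])
  finally show ?thesis unfolding c_def .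
qed

lemma measure_prepare_completely_positive:
  assumes R: "measure_prepare n S wt mv yv \<Phi>"
  shows "completely_positive n \<Phi>"
  unfolding completely_positive_def positive_map_def
proof (intro allI impI)
  fix k X assume p: "psd (k*n) X"
  let ?M = "id_tensor k n \<Phi> X"
  have w: "\<And>t. t \<in> S \<Longrightarrow> 0 \<le> wt t" using R unfolding measure_prepare_def by auto
  have car: "?M \<in> carrier_mat (k*n) (k*n)" by (rule index_id_tensor)
  have adj: "adj ?M = ?M"
  proof (rule eq_matI)
    fix I J assume "I < dim_row ?M" "J < dim_col ?M"
    then have IJ: "I < k*n" "J < k*n" using car by auto
    then have dv: "I div n < k" "J div n < k" by (simp_all add: less_mult_imp_div_less)
    have "adj ?M $$ (I,J) = cnj (?M $$ (J,I))" using car IJ unfolding adj_def by auto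
    also have "\<dots> = ?M $$ (I,J)"
      unfolding index_id_tensor_measure_prepare[OF R IJ] index_id_tensor_measure_prepare[OF R IJ(2,1)] cnj_sum
      by (intro sum.cong refl) (simp add: cnj_qform_blk[OF p dv(2,1)])
    finally show "adj ?M $$ (I,J) = ?M $$ (I,J)" .
  qed (use car in \<open>auto simp: adj_def\<close>)
  have qpos: "0 \<le> Re (\<Sum>I<k*n. \<Sum>J<k*n. cnj (v $ I) * ?M $$ (I,J) * v $ J)" for v :: "complex vec"
  proof -
    have "(\<Sum>I<k*n. \<Sum>J<k*n. cnj (v $ I) * ?M $$ (I,J) * v $ J)
      = (\<Sum>t\<in>S. complex_of_real (wt t) * (\<Sum>I<k*n. \<Sum>J<k*n. cnj (v $ I) *
           (qform n (blk n X (I div n) (J div n)) (mv t) * yv t (I mod n) * cnj (yv t (J mod n))) * v $ J))"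
      by (simp add: index_id_tensor_measure_prepare[OF R] sum_distrib_left sum_distrib_right mult_ac sum.swap[of _ S])
    also have "\<dots> = (\<Sum>t\<in>S. complex_of_real (wt t) *
        qform (k*n) X (\<lambda>I. (\<Sum>j<n. cnj (yv t j) * v $ ((I div n)*n + j)) * mv t (I mod n)))"
      by (simp add: qform_id_tensor_rank_one)
    finally have e: "(\<Sum>I<k*n. \<Sum>J<k*n. cnj (v $ I) * ?M $$ (I,J) * v $ J) = \<dots>" .
    show ?thesis unfolding e Re_sum
      by (intro sum_nonneg) (simp add: w psd_qform_nonneg[OF p])
  qed
  show "psd (k*n) ?M" unfolding psd_def using car adj qpos by blast
qed

lemma measure_prepare_entanglement_breaking:
  assumes R: "measure_prepare n S wt mv yv \<Phi>"
  shows "entanglement_breaking n \<Phi>"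
  unfolding entanglement_breaking_def
proof (intro conjI allI impI)
  show "completely_positive n \<Phi>" by (rule measure_prepare_completely_positive[OF R])
  fix k \<rho> assume st: "is_state (k*n) \<rho>"
  then have p: "psd (k*n) \<rho>" unfolding is_state_def by auto
  have fin: "finite S" and w: "\<And>t. t \<in> S \<Longrightarrow> 0 \<le> wt t" using R
      unfolding measure_prepare_def by auto
  obtain h where h: "bij_betw h {0..<card S} S" using ex_bij_betw_nat_finite[OF fin] by blast
  define A where "A t = complex_of_real (wt (h t)) \<cdot>\<^sub>m mat k k
      (\<lambda>(a,b). qform n (blk n \<rho> a b) (mv (h t)))" for t
  define B where "B t = mat n n (\<lambda>(i,j). yv (h t) i * cnj (yv (h t) j))" for t
  have AB: "\<forall>t<card S. psd k (A t) \<and> psd n (B t)"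
  proof (intro allI impI conjI)
    fix t assume "t < card S"
    then have "h t \<in> S" using h by (auto simp: bij_betw_def)
    then show "psd k (A t)" unfolding A_def by (intro psd_scaled_qform_blk_matrix[OF p] w)
    show "psd n (B t)" unfolding B_def by (rule psd_outer_product)
  qed
  have eq: "\<forall>i<k*n. \<forall>j<k*n. id_tensor k n \<Phi> \<rho> $$ (i,j)
      = (\<Sum>t<card S. kron (A t) (B t) $$ (i,j))"
  proof (intro allI impI)
    fix I J assume IJ: "I < k*n" "J < k*n"
    then have n: "0 < n" by (cases n) auto
    have dv: "I div n < k" "J div n < k" "I mod n < n" "J mod n < n" using IJ n
      by (simp_all add: less_mult_imp_div_less)
    have "id_tensor k n \<Phi> \<rho> $$ (I,J) = (\<Sum>t\<in>S. complex_of_real (wt t) *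
       qform n (blk n \<rho> (I div n) (J div n)) (mv t) * yv t (I mod n) * cnj (yv t (J mod n)))"
      by (rule index_id_tensor_measure_prepare[OF R IJ])
    also have "\<dots> = (\<Sum>t\<in>{0..<card S}. complex_of_real (wt (h t)) *
       qform n (blk n \<rho> (I div n) (J div n)) (mv (h t)) * yv (h t) (I mod n) * cnj (yv (h t) (J mod n)))"
      by (rule sum.reindex_bij_betw[OF h, symmetric])
    also have "\<dots> = (\<Sum>t<card S. kron (A t) (B t) $$ (I,J))"
      unfolding atLeast0LessThan
      by (intro sum.cong refl) (simp add: kron_def A_def B_def IJ dv)
    finally show "id_tensor k n \<Phi> \<rho> $$ (I,J) = (\<Sum>t<card S. kron (A t) (B t) $$ (I,J))" .
  qed
  show "is_separable k n (id_tensor k n \<Phi> \<rho>)"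
    unfolding is_separable_def using index_id_tensor(2) AB eq by blast
qed

section \<open>The maximally entangled state\<close>

lemma index_Pplus: "I < n*n \<Longrightarrow> J < n*n \<Longrightarrow>
  Pplus n $$ (I,J) = (if I div n = I mod n \<and> J div n = J mod n then 1 / of_nat n else 0)"
  unfolding Pplus_def by simp

lemma Pplus_carrier_mat: "Pplus n \<in> carrier_mat (n*n) (n*n)" unfolding Pplus_def by simp

lemma index_blk_Pplus: assumes "a < n" "b < n" "i < n" "j < n"
  shows "blk n (Pplus n) a b $$ (i,j) = (if i = a \<and> j = b then 1 / of_nat n else 0)"
proof -
  have "a*n+i < n*n" "b*n+j < n*n" using assms by (auto intro: block_index_less)
  then show ?thesis using assms by (simp add: index_blk index_Pplus)
qed

lemma mtrace_blk_Pplus: assumes "a < n" "b < n"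
  shows "mtrace (blk n (Pplus n) a b) = (if a = b then 1 / of_nat n else 0)"
proof -
  have "mtrace (blk n (Pplus n) a b) = (\<Sum>i<n. if a = i \<and> b = i then 1 / of_nat n else 0)"
    unfolding mtrace_def dim_blk by (intro sum.cong refl) (auto simp: index_blk_Pplus assms)
  also have "\<dots> = (if a = b then 1 / of_nat n else 0)" using assms(1) by (simp add: sum_if_diag)
  finally show ?thesis .
qed

lemma qform_blk_Pplus: assumes "a < n" "b < n"
  shows "qform n (blk n (Pplus n) a b) v = cnj (v a) * v b / of_nat n"
proof -
  have "qform n (blk n (Pplus n) a b) v
      = (\<Sum>k<n. \<Sum>l<n. if k = a then (if l = b then cnj (v a) * v b / of_nat n else 0) else 0)"
    unfolding qform_def by (intro sum.cong refl) (auto simp: index_blk_Pplus assms)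
  also have "\<dots> = cnj (v a) * v b / of_nat n" using assms by (simp add: sum_sum_if_fst)
  finally show ?thesis .
qed

lemma psd_Pplus: "psd (n*n) (Pplus n)"
proof -
  let ?c = "\<lambda>I. I div n = I mod n"
  have car: "Pplus n \<in> carrier_mat (n*n) (n*n)" by (rule Pplus_carrier_mat)
  have adj: "adj (Pplus n) = Pplus n"
    by (rule eq_matI) (auto simp: adj_def index_Pplus Pplus_def)
  have "0 \<le> Re (\<Sum>I<n*n. \<Sum>J<n*n. cnj (v $ I) * Pplus n $$ (I,J) * v $ J)" for v :: "complex vec"
  proof -
    define f where "f I = (if ?c I then cnj (v $ I) else 0)" for I
    define g where "g J = (if ?c J then v $ J else 0)" for J
    have fg: "f I = cnj (g I)" for I unfolding f_def g_def by simp
    have "(\<Sum>I<n*n. \<Sum>J<n*n. cnj (v $ I) * Pplus n $$ (I,J) * v $ J)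
       = (\<Sum>I<n*n. \<Sum>J<n*n. f I * g J / of_nat n)"
      by (intro sum.cong refl) (simp add: index_Pplus f_def g_def)
    also have "\<dots> = (\<Sum>I<n*n. f I) * (\<Sum>J<n*n. g J) / of_nat n"
      by (simp only: sum_product sum_divide_distrib)
    also have "\<dots> = cnj (\<Sum>J<n*n. g J) * (\<Sum>J<n*n. g J) / of_nat n"
      by (simp add: fg cnj_sum)
    finally have e: "(\<Sum>I<n*n. \<Sum>J<n*n. cnj (v $ I) * Pplus n $$ (I,J) * v $ J)
        = cnj (\<Sum>J<n*n. g J) * (\<Sum>J<n*n. g J) / of_nat n" .
    define G where "G = (\<Sum>J<n*n. g J)"
    have "cnj G * G = complex_of_real ((Re G)\<^sup>2 + (Im G)\<^sup>2)"
      using complex_mult_cnj[of G] by (simp add: mult.commute)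
    then show ?thesis unfolding e G_def[symmetric] by simp
  qed
  then show ?thesis unfolding psd_def using car adj by blast
qed

lemma is_state_Pplus: assumes "n > 0" shows "is_state (n*n) (Pplus n)"
proof -
  have "mtrace (Pplus n) = (\<Sum>I<n*n. Pplus n $$ (I,I))" unfolding mtrace_def Pplus_def by simp
  also have "\<dots> = (\<Sum>a<n. \<Sum>i<n. Pplus n $$ (a*n+i, a*n+i))" by (rule sum_lessThan_mult_blocks)
  also have "\<dots> = (\<Sum>a<n. \<Sum>i<n. if i = a then 1 / of_nat n else 0)"
  proof (intro sum.cong refl)
    fix a i assume "a \<in> {..<n}" "i \<in> {..<n}"
    then have "a*n+i < n*n" "a < n" "i < n" by (auto intro: block_index_less)
    then show "Pplus n $$ (a*n+i, a*n+i) = (if i = a then 1 / of_nat n else 0)" by (auto simp: index_Pplus)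
  qed
  also have "\<dots> = 1" using assms by simp
  finally show ?thesis unfolding is_state_def using psd_Pplus by blast
qed

lemma qform_id_tensor_Pplus:
  assumes n: "n > 0"
  shows "qform (n*n) (id_tensor n n \<Phi> (Pplus n)) (\<lambda>I. if I div n = I mod n then 1 else 0)
     = (\<Sum>a<n. \<Sum>b<n. \<Phi> (blk n (Pplus n) a b) $$ (a,b))"
proof -
  have "qform (n*n) (id_tensor n n \<Phi> (Pplus n)) (\<lambda>I. if I div n = I mod n then 1 else 0)
     = (\<Sum>a<n. \<Sum>i<n. \<Sum>b<n. \<Sum>j<n.
         if i = a then (if j = b then \<Phi> (blk n (Pplus n) a b) $$ (a,b) else 0) else 0)"
    unfolding qform_def sum_lessThan_mult_blocks
  proof (intro sum.cong refl)
    fix a i b j assume "a \<in> {..<n}" "i \<in> {..<n}" "b \<in> {..<n}" "j \<in> {..<n}"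
    then have h: "a < n" "i < n" "b < n" "j < n" by auto
    then have "a*n+i < n*n" "b*n+j < n*n" by (auto intro: block_index_less)
    then show "cnj (if (a*n+i) div n = (a*n+i) mod n then 1 else 0) * id_tensor n n \<Phi> (Pplus n) $$ (a*n+i, b*n+j)
        * (if (b*n+j) div n = (b*n+j) mod n then 1 else 0)
       = (if i = a then (if j = b then \<Phi> (blk n (Pplus n) a b) $$ (a,b) else 0) else 0)"
      using h by (auto simp: index_id_tensor)
  qed
  also have "\<dots> = (\<Sum>a<n. \<Sum>b<n. \<Phi> (blk n (Pplus n) a b) $$ (a,b))"
    by (rule sum.cong[OF refl]) (simp only: sum_if_left, simp)
  finally show ?thesis .
qed

section \<open>Entries of the maps\<close>

definition trace_upper :: "nat \<Rightarrow> complex mat \<Rightarrow> complex" where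
  "trace_upper m Y = (\<Sum>i<m. Y $$ (i,i))"

definition trace_lower :: "nat \<Rightarrow> complex mat \<Rightarrow> complex" where
  "trace_lower m Y = (\<Sum>i<m. Y $$ (m+i,m+i))"

lemma mtrace_upper_lower: "Y \<in> carrier_mat (2*m) (2*m) \<Longrightarrow>
    mtrace Y = trace_upper m Y + trace_lower m Y"
proof -
  assume "Y \<in> carrier_mat (2*m) (2*m)"
  then have "mtrace Y = (\<Sum>I<2*m. Y $$ (I,I))" unfolding mtrace_def by auto
  also have "\<dots> = (\<Sum>a<2. \<Sum>i<m. Y $$ (a*m+i, a*m+i))" by (rule sum_lessThan_mult_blocks)
  also have "\<dots> = trace_upper m Y + trace_lower m Y"
      by (simp add: trace_upper_def trace_lower_def numeral_2_eq_2)
  finally show ?thesis .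
qed

lemma PhiU_blocks:
  assumes m: "m = 2*N"
  shows "PhiU N U Y = (1 / of_nat m) \<cdot>\<^sub>m four_block_mat
        (mtrace (blk m Y (Suc 0) (Suc 0)) \<cdot>\<^sub>m 1\<^sub>m m)
        (- (blk m Y 0 1 + U * transpose_mat (blk m Y (Suc 0) 0) * adj U))
        (- (blk m Y 1 0 + U * transpose_mat (blk m Y 0 (Suc 0)) * adj U))
        (mtrace (blk m Y 0 0) \<cdot>\<^sub>m 1\<^sub>m m)"
  unfolding PhiU_def Let_def m One_nat_def ..

lemma mtrace_blk_diag: "mtrace (blk m Y (Suc 0) (Suc 0)) = trace_lower m Y" "mtrace (blk m Y 0 0) = trace_upper m Y"
  unfolding mtrace_def trace_upper_def trace_lower_def dim_blk by (intro sum.cong refl; simp add: index_blk)+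

lemma index_conjugate_transpose_blk:
  assumes U: "U \<in> carrier_mat m m" and rs: "r < m" "s < m"
  shows "(U * transpose_mat (blk m Y a b) * adj U) $$ (r,s)
       = (\<Sum>q<m. (\<Sum>p<m. U $$ (r,p) * Y $$ (a*m+q, b*m+p)) * cnj (U $$ (s,q)))"
  unfolding index_conjugate_by[OF U _ rs, of "transpose_mat (blk m Y a b)", simplified]
  by (intro sum.cong refl) (simp add: index_blk)

lemma PhiU_uu:
  assumes m: "m = 2*N" and rs: "r < m" "s < m"
  shows "PhiU N U Y $$ (r,s) = (1 / of_nat m) * (if r = s then trace_lower m Y else 0)"
  unfolding PhiU_blocks[OF m] using rs by (simp add: mtrace_blk_diag)

lemma PhiU_ll:
  assumes m: "m = 2*N" and rs: "r < m" "s < m"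
  shows "PhiU N U Y $$ (m+r,m+s) = (1 / of_nat m) * (if r = s then trace_upper m Y else 0)"
  unfolding PhiU_blocks[OF m] using rs by (simp add: mtrace_blk_diag)

lemma PhiU_ul:
  assumes m: "m = 2*N" and U: "U \<in> carrier_mat m m" and rs: "r < m" "s < m"
  shows "PhiU N U Y $$ (r,m+s) = - (1 / of_nat m)
      * (Y $$ (r,m+s) + (\<Sum>q<m. (\<Sum>p<m. U $$ (r,p) * Y $$ (m+q,p)) * cnj (U $$ (s,q))))"
proof -
  have "adj U \<in> carrier_mat m m" by (rule adj_carrier_mat[OF U])
  then show ?thesis unfolding PhiU_blocks[OF m] using U rs
    by (simp add: index_conjugate_transpose_blk[OF U rs] index_blk diff_divide_distrib add_divide_distrib)
qed

lemma PhiU_lu: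
  assumes m: "m = 2*N" and U: "U \<in> carrier_mat m m" and rs: "r < m" "s < m"
  shows "PhiU N U Y $$ (m+r,s) = - (1 / of_nat m)
      * (Y $$ (m+r,s) + (\<Sum>q<m. (\<Sum>p<m. U $$ (r,p) * Y $$ (q,m+p)) * cnj (U $$ (s,q))))"
proof -
  have "adj U \<in> carrier_mat m m" by (rule adj_carrier_mat[OF U])
  then show ?thesis unfolding PhiU_blocks[OF m] using U rs
    by (simp add: index_conjugate_transpose_blk[OF U rs] index_blk diff_divide_distrib add_divide_distrib)
qed

lemma dim_PhiU: "dim_row (PhiU N U Y) = 4*N" "dim_col (PhiU N U Y) = 4*N"
  unfolding PhiU_def Let_def by simp_all

lemma trace_PhiU:
  assumes Y: "Y \<in> carrier_mat (4*N) (4*N)"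
  shows "(\<Sum>i<4*N. PhiU N U Y $$ (i,i)) = mtrace Y"
proof -
  let ?m = "2*N"
  have Y': "Y \<in> carrier_mat (2*?m) (2*?m)" using Y by simp
  have "(\<Sum>i<4*N. PhiU N U Y $$ (i,i)) = (\<Sum>i<2*?m. PhiU N U Y $$ (i,i))" by simp
  also have "\<dots> = (\<Sum>a<2. \<Sum>i<?m. PhiU N U Y $$ (a*?m+i, a*?m+i))" by (rule sum_lessThan_mult_blocks)
  also have "\<dots> = (\<Sum>i<?m. PhiU N U Y $$ (i,i)) + (\<Sum>i<?m. PhiU N U Y $$ (?m+i, ?m+i))"
    by (simp add: numeral_2_eq_2)
  also have "(\<Sum>i<?m. PhiU N U Y $$ (i,i)) = (\<Sum>i<?m. (1 / of_nat ?m) * trace_lower ?m Y)"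
    by (intro sum.cong refl) (simp add: PhiU_uu)
  also have "(\<Sum>i<?m. PhiU N U Y $$ (?m+i, ?m+i)) = (\<Sum>i<?m. (1 / of_nat ?m) * trace_upper ?m Y)"
    by (intro sum.cong refl) (simp add: PhiU_ll)
  also have "(\<Sum>i<?m. (1 / of_nat ?m) * trace_lower ?m Y)
      + (\<Sum>i<?m. (1 / of_nat ?m) * trace_upper ?m Y) = trace_upper ?m Y + trace_lower ?m Y"
    by (cases "N = 0") (auto simp: trace_upper_def trace_lower_def)
  also have "\<dots> = mtrace Y" by (rule mtrace_upper_lower[OF Y', symmetric])
  finally show ?thesis .
qed

lemma PhiTilde_carrier_mat: "PhiTilde N U p Y \<in> carrier_mat (4*N) (4*N)"
proof -
  have "dim_row (PhiTilde N U p Y) = 4*N" unfolding PhiTilde_def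
    by (simp only: index_add_mat(2) index_smult_mat(2) dim_PhiU)
  moreover have "dim_col (PhiTilde N U p Y) = 4*N" unfolding PhiTilde_def
    by (simp only: index_add_mat(3) index_smult_mat(3) dim_PhiU)
  ultimately show ?thesis by auto
qed

lemma index_PhiTilde:
  assumes rs: "r < 4*N" "s < 4*N"
  shows "PhiTilde N U p Y $$ (r,s) = complex_of_real p * mtrace Y / of_nat (4*N) * (if r = s then 1 else 0)
     + complex_of_real (1 - p) * PhiU N U Y $$ (r,s)"
proof -
  have d: "r < dim_row (complex_of_real (1 - p) \<cdot>\<^sub>m PhiU N U Y)" "s < dim_col
      (complex_of_real (1 - p) \<cdot>\<^sub>m PhiU N U Y)"
    "r < dim_row (PhiU N U Y)" "s < dim_col (PhiU N U Y)"
    using rs by (simp_all only: index_smult_mat(2,3) dim_PhiU)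
  have d2: "r < dim_row (1\<^sub>m (4*N))" "s < dim_col (1\<^sub>m (4*N))" using rs by simp_all
  show ?thesis unfolding PhiTilde_def index_add_mat(1)[OF d(1,2)] index_smult_mat(1)[OF d(3,4)]
      index_smult_mat(1)[OF d2]
    index_one_mat(1)[OF rs] by simp
qed

section \<open>A measure-and-prepare form of \<open>Tr(\<cdot>) I + PhiU\<close>\<close>

definition root4 :: "nat \<Rightarrow> complex" where
  "root4 w = (if w = 0 then 1 else if w = 1 then \<i> else if w = 2 then -1 else -\<i>)"

definition ket :: "nat \<Rightarrow> nat \<Rightarrow> complex" where
  "ket a x = (if x = a then 1 else 0)"

lemma cnj_ket[simp]: "cnj (ket a x) = ket a x" by (simp add: ket_def)

lemma lessThan_4_eq: "{..<4::nat} = {0,1,2,3}" by auto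

text \<open>Averaging over the fourth roots of unity \<open>\<omega>\<close> keeps exactly the terms in which \<open>\<omega>\<close> is
  paired with \<open>cnj \<omega>\<close>.\<close>

lemma sum_root4_qform_pair:
  "(\<Sum>w<4. (\<alpha> + root4 w * \<beta> + cnj (root4 w) * \<gamma>
      + cnj (root4 w) * root4 w * \<delta>) * (x - root4 w * y) * (u - cnj (root4 w) * v))
   = 4 * ((\<alpha> + \<delta>) * (x*u + y*v) - \<beta>*x*v - \<gamma>*y*u)"
  unfolding lessThan_4_eq by (simp add: root4_def algebra_simps)

lemma sum_root4_qform_pair_cnj:
  "(\<Sum>w<4. (\<alpha> + root4 w * \<beta> + cnj (root4 w) * \<gamma>
      + cnj (root4 w) * root4 w * \<delta>) * (x - cnj (root4 w) * y) * (u - root4 w * v))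
   = 4 * ((\<alpha> + \<delta>) * (x*u + y*v) - \<beta>*y*u - \<gamma>*x*v)"
  unfolding lessThan_4_eq by (simp add: root4_def algebra_simps)

lemma mult_ket: "g * ket a l = (if l = a then g else 0)" by (simp add: ket_def)

lemma ket_mult: "ket a l * g = (if l = a then g else 0)" by (simp add: ket_def)

lemma mult_if_zero: "g * (if P then x else 0) = (if P then g * x else (0::complex))" by simp

lemma sum_mult_ket_pair:
  assumes "a < n" "b < n"
  shows "(\<Sum>l<n. g l * (ket a l + c * ket b l)) = g a + c * g b"
  using assms by (simp add: distrib_left sum.distrib mult_ket mult_if_zero mult.commute)

lemma qform_ket_pair:
  assumes "a < n" "b < n" "a \<noteq> b"
  shows "qform n Y (\<lambda>x. ket a x + c * ket b x) =
     Y $$ (a,a) + c * Y $$ (a,b) + cnj c * Y $$ (b,a) + cnj c * c * Y $$ (b,b)"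
proof -
  have "qform n Y (\<lambda>x. ket a x + c * ket b x)
      = (\<Sum>k<n. (Y $$ (k,a) + c * Y $$ (k,b)) * (ket a k + cnj c * ket b k))"
    unfolding qform_eq_sum_mult_sum using assms by (simp add: sum_mult_ket_pair mult.commute)
  also have "\<dots> = (Y $$ (a,a) + c * Y $$ (a,b)) + cnj c * (Y $$ (b,a) + c * Y $$ (b,b))"
    by (rule sum_mult_ket_pair[OF assms(1,2)])
  finally show ?thesis by (simp add: algebra_simps)
qed

lemma qform_ket:
  assumes "a < n"
  shows "qform n Y (ket a) = Y $$ (a,a)"
  using assms unfolding qform_eq_sum_mult_sum by (simp add: mult_ket ket_mult)

lemma qform_zero: "qform n Y (\<lambda>x. 0) = 0" by (simp add: qform_def)

definition upper :: "nat \<Rightarrow> (nat \<Rightarrow> complex) \<Rightarrow> nat \<Rightarrow> complex" where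
  "upper m f x = (if x < m then f x else 0)"

definition lower :: "nat \<Rightarrow> (nat \<Rightarrow> complex) \<Rightarrow> nat \<Rightarrow> complex" where
  "lower m f x = (if x < m then 0 else f (x - m))"

lemma cnj_upper[simp]: "cnj (upper m f x) = upper m (\<lambda>y. cnj (f y)) x" by (simp add: upper_def)

lemma cnj_lower[simp]: "cnj (lower m f x) = lower m (\<lambda>y. cnj (f y)) x" by (simp add: lower_def)

definition meas_pair :: "nat \<Rightarrow> nat \<Rightarrow> nat \<Rightarrow> nat \<Rightarrow> nat \<Rightarrow> complex" where
  "meas_pair m i j w x = ket i x + root4 w * ket (m+j) x"

definition prep_pair :: "nat \<Rightarrow> nat \<Rightarrow> nat \<Rightarrow> nat \<Rightarrow> nat \<Rightarrow> complex" where
  "prep_pair m i j w x = upper m (ket i) x - root4 w * lower m (ket j) x"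

lemma of_real_inverse_4mult: "complex_of_real (1/real (4*m)) * (4*Z) = complex_of_real (1/real m) * Z"
  by (cases "m = 0") (auto simp: field_simps)

lemma sum_root4_pair_term:
  assumes "i < m" "j < m"
  shows "(\<Sum>w<4. complex_of_real (1/real (4*m)) * qform (2*m) Y (meas_pair m i j w)
      * prep_pair m i j w r * cnj (prep_pair m i j w s))
   = complex_of_real (1/real m) * ((Y $$ (i,i) + Y $$ (m+j,m+j))
       * (upper m (ket i) r * upper m (ket i) s + lower m (ket j) r * lower m (ket j) s)
       - Y $$ (i,m+j) * upper m (ket i) r * lower m (ket j) s - Y $$ (m+j,i) * lower m (ket j) r * upper m (ket i) s)"
proof -
  have q: "qform (2*m) Y (meas_pair m i j w) = Y $$ (i,i) + root4 w * Y $$ (i,m+j)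
      + cnj (root4 w) * Y $$ (m+j,i) + cnj (root4 w) * root4 w * Y $$ (m+j,m+j)" for w
    unfolding meas_pair_def using assms by (intro qform_ket_pair) auto
  have "(\<Sum>w<4. complex_of_real (1/real (4*m)) * qform (2*m) Y (meas_pair m i j w) * prep_pair m i j w r
      * cnj (prep_pair m i j w s))
    = complex_of_real (1/real (4*m)) * (\<Sum>w<4.
        (Y $$ (i,i) + root4 w * Y $$ (i,m+j) + cnj (root4 w) * Y $$ (m+j,i)
        + cnj (root4 w) * root4 w * Y $$ (m+j,m+j))
        * (upper m (ket i) r - root4 w * lower m (ket j) r)
            * (upper m (ket i) s - cnj (root4 w) * lower m (ket j) s))"
    unfolding q prep_pair_def by (simp add: sum_distrib_left mult.assoc)
  also have "\<dots> = complex_of_real (1/real (4*m))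
      * (4 * ((Y $$ (i,i) + Y $$ (m+j,m+j)) *
      (upper m (ket i) r * upper m (ket i) s + lower m (ket j) r * lower m (ket j) s)
       - Y $$ (i,m+j) * upper m (ket i) r * lower m (ket j) s
           - Y $$ (m+j,i) * lower m (ket j) r * upper m (ket i) s))"
    by (simp only: sum_root4_qform_pair)
  finally show ?thesis by (simp only: of_real_inverse_4mult)
qed

definition cross_part :: "nat \<Rightarrow> complex mat \<Rightarrow> nat \<Rightarrow> nat \<Rightarrow> complex" where
  "cross_part m Y r s = (\<Sum>i<m. \<Sum>j<m. \<Sum>w<4. complex_of_real (1/real (4*m))
     * qform (2*m) Y (meas_pair m i j w) * prep_pair m i j w r * cnj (prep_pair m i j w s))"

lemma cross_part_eq: "cross_part m Y r s = (\<Sum>i<m. \<Sum>j<m. complex_of_real (1/real m)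
    * ((Y $$ (i,i) + Y $$ (m+j,m+j)) * (upper m (ket i) r * upper m (ket i) s + lower m (ket j) r * lower m (ket j) s)
       - Y $$ (i,m+j) * upper m (ket i) r * lower m (ket j) s
           - Y $$ (m+j,i) * lower m (ket j) r * upper m (ket i) s))"
  unfolding cross_part_def by (intro sum.cong refl) (rule sum_root4_pair_term; simp)

lemma cross_part_uu: assumes "r < m" "s < m"
  shows "cross_part m Y r s = (if r = s then Y $$ (r,r) + complex_of_real (1/real m) * trace_lower m Y else 0)"
proof (cases "r = s")
  case True
  have "cross_part m Y r s
      = (\<Sum>i<m. \<Sum>j<m. if i = r then complex_of_real (1/real m) * (Y $$ (r,r) + Y $$ (m+j,m+j)) else 0)"
    unfolding cross_part_eq using assms True by (intro sum_sum_cong) (auto simp: upper_def lower_def ket_def)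
  also have "\<dots> = complex_of_real (1/real m) * (of_nat m * Y $$ (r,r) + trace_lower m Y)"
    using assms by (simp add: sum_sum_if_fst trace_lower_def sum.distrib sum_divide_distrib[symmetric])
  also have "\<dots> = Y $$ (r,r) + complex_of_real (1/real m) * trace_lower m Y"
    using assms by (simp add: distrib_left)
  finally show ?thesis using True by simp
next
  case False
  have "cross_part m Y r s = (\<Sum>i<m. \<Sum>j<m. 0)"
    unfolding cross_part_eq using assms False by (intro sum_sum_cong) (auto simp: upper_def lower_def ket_def)
  then show ?thesis using False by simp
qed

lemma cross_part_ul: assumes "r < m" "s' < m"
  shows "cross_part m Y r (m+s') = - complex_of_real (1/real m) * Y $$ (r, m+s')"
proof -
  have "cross_part m Y r (m+s') 
      = (\<Sum>i<m. \<Sum>j<m. if i = r \<and> j = s' then - complex_of_real (1/real m) * Y $$ (r, m+s') else 0)"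
    unfolding cross_part_eq using assms by (intro sum_sum_cong) (auto simp: upper_def lower_def ket_def)
  then show ?thesis using assms by (simp add: sum_sum_if_both)
qed

lemma cross_part_lu: assumes "r' < m" "s < m"
  shows "cross_part m Y (m+r') s = - complex_of_real (1/real m) * Y $$ (m+r', s)"
proof -
  have "cross_part m Y (m+r') s 
      = (\<Sum>i<m. \<Sum>j<m. if i = s \<and> j = r' then - complex_of_real (1/real m) * Y $$ (m+r', s) else 0)"
    unfolding cross_part_eq using assms by (intro sum_sum_cong) (auto simp: upper_def lower_def ket_def)
  then show ?thesis using assms by (simp add: sum_sum_if_both)
qed

lemma cross_part_ll: assumes "r' < m" "s' < m"
  shows "cross_part m Y (m+r') (m+s')
    = (if r' = s' then Y $$ (m+r',m+r') + complex_of_real (1/real m) * trace_upper m Y else 0)"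
proof (cases "r' = s'")
  case True
  have "cross_part m Y (m+r') (m+s')
      = (\<Sum>i<m. \<Sum>j<m. if j = r' then complex_of_real (1/real m) * (Y $$ (i,i) + Y $$ (m+r',m+r')) else 0)"
    unfolding cross_part_eq using assms True by (intro sum_sum_cong) (auto simp: upper_def lower_def ket_def)
  also have "\<dots> = complex_of_real (1/real m) * (trace_upper m Y + of_nat m * Y $$ (m+r',m+r'))"
    using assms by (simp add: sum_sum_if_snd trace_upper_def sum.distrib sum_divide_distrib[symmetric])
  also have "\<dots> = Y $$ (m+r',m+r') + complex_of_real (1/real m) * trace_upper m Y"
    using assms by (simp add: distrib_left)
  finally show ?thesis using True by simp
next
  case False
  have "cross_part m Y (m+r') (m+s') = (\<Sum>i<m. \<Sum>j<m. 0)"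
    unfolding cross_part_eq using assms False by (intro sum_sum_cong) (auto simp: upper_def lower_def ket_def)
  then show ?thesis using False by simp
qed

definition prep_unitary_pair :: "nat \<Rightarrow> complex mat \<Rightarrow> nat \<Rightarrow> nat \<Rightarrow> nat \<Rightarrow> nat \<Rightarrow> complex" where
  "prep_unitary_pair m U p q w x = upper m (\<lambda>x. U $$ (x,p)) x
      - cnj (root4 w) * lower m (\<lambda>x. U $$ (x,q)) x"

lemma sum_root4_unitary_pair_term:
  assumes "p < m" "q < m"
  shows "(\<Sum>w<4. complex_of_real (1/real (4*m)) * qform (2*m) Y (meas_pair m p q w)
      * prep_unitary_pair m U p q w r * cnj (prep_unitary_pair m U p q w s))
   = complex_of_real (1/real m) * ((Y $$ (p,p) + Y $$ (m+q,m+q)) *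
        (upper m (\<lambda>x. U $$ (x,p)) r * upper m (\<lambda>x. cnj (U $$ (x,p))) s
            + lower m (\<lambda>x. U $$ (x,q)) r * lower m (\<lambda>x. cnj (U $$ (x,q))) s)
       - Y $$ (p,m+q) * lower m (\<lambda>x. U $$ (x,q)) r * upper m (\<lambda>x. cnj (U $$ (x,p))) s
       - Y $$ (m+q,p) * upper m (\<lambda>x. U $$ (x,p)) r * lower m (\<lambda>x. cnj (U $$ (x,q))) s)"
proof -
  have q: "qform (2*m) Y (meas_pair m p q w) = Y $$ (p,p) + root4 w * Y $$ (p,m+q)
      + cnj (root4 w) * Y $$ (m+q,p) + cnj (root4 w) * root4 w * Y $$ (m+q,m+q)" for w
    unfolding meas_pair_def using assms by (intro qform_ket_pair) auto
  have "(\<Sum>w<4. complex_of_real (1/real (4*m)) * qform (2*m) Y (meas_pair m p q w)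
      * prep_unitary_pair m U p q w r * cnj (prep_unitary_pair m U p q w s))
    = complex_of_real (1/real (4*m)) * (\<Sum>w<4.
        (Y $$ (p,p) + root4 w * Y $$ (p,m+q) + cnj (root4 w) * Y $$ (m+q,p)
        + cnj (root4 w) * root4 w * Y $$ (m+q,m+q))
        * (upper m (\<lambda>x. U $$ (x,p)) r - cnj (root4 w) * lower m (\<lambda>x. U $$ (x,q)) r)
        * (upper m (\<lambda>x. cnj (U $$ (x,p))) s - root4 w * lower m (\<lambda>x. cnj (U $$ (x,q))) s))"
    unfolding q prep_unitary_pair_def by (simp add: sum_distrib_left mult.assoc)
  also have "\<dots> = complex_of_real (1/real (4*m)) * (4 * ((Y $$ (p,p) + Y $$ (m+q,m+q)) *
        (upper m (\<lambda>x. U $$ (x,p)) r * upper m (\<lambda>x. cnj (U $$ (x,p))) s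
            + lower m (\<lambda>x. U $$ (x,q)) r * lower m (\<lambda>x. cnj (U $$ (x,q))) s)
       - Y $$ (p,m+q) * lower m (\<lambda>x. U $$ (x,q)) r * upper m (\<lambda>x. cnj (U $$ (x,p))) s
       - Y $$ (m+q,p) * upper m (\<lambda>x. U $$ (x,p)) r * lower m (\<lambda>x. cnj (U $$ (x,q))) s))"
    by (simp only: sum_root4_qform_pair_cnj)
  finally show ?thesis by (simp only: of_real_inverse_4mult)
qed

definition twist_part :: "nat \<Rightarrow> complex mat \<Rightarrow> complex mat \<Rightarrow> nat \<Rightarrow> nat \<Rightarrow> complex" where
  "twist_part m U Y r s = (\<Sum>i<m. \<Sum>j<m. \<Sum>w<4. complex_of_real (1/real (4*m))
     * qform (2*m) Y (meas_pair m i j w) * prep_unitary_pair m U i j w r * cnj (prep_unitary_pair m U i j w s))"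

lemma twist_part_eq: "twist_part m U Y r s = (\<Sum>p<m. \<Sum>q<m. complex_of_real (1/real m)
    * ((Y $$ (p,p) + Y $$ (m+q,m+q)) *
        (upper m (\<lambda>x. U $$ (x,p)) r * upper m (\<lambda>x. cnj (U $$ (x,p))) s
            + lower m (\<lambda>x. U $$ (x,q)) r * lower m (\<lambda>x. cnj (U $$ (x,q))) s)
       - Y $$ (p,m+q) * lower m (\<lambda>x. U $$ (x,q)) r * upper m (\<lambda>x. cnj (U $$ (x,p))) s
       - Y $$ (m+q,p) * upper m (\<lambda>x. U $$ (x,p)) r * lower m (\<lambda>x. cnj (U $$ (x,q))) s))"
  unfolding twist_part_def by (intro sum.cong refl) (rule sum_root4_unitary_pair_term; simp)

lemma twist_part_uu: assumes U: "U \<in> carrier_mat m m" "U * adj U = 1\<^sub>m m" and rs: "r < m" "s < m"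
  shows "twist_part m U Y r s = (\<Sum>p<m. Y $$ (p,p) * (U $$ (r,p) * cnj (U $$ (s,p))))
      + (if r = s then complex_of_real (1/real m) * trace_lower m Y else 0)"
proof -
  let ?c = "complex_of_real (1/real m)"
  have m: "0 < m" using rs by simp
  have "twist_part m U Y r s = (\<Sum>p<m. \<Sum>q<m. ?c * (Y $$ (p,p) * (U $$ (r,p) * cnj (U $$ (s,p))))
      + ?c * (U $$ (r,p) * cnj (U $$ (s,p)) * Y $$ (m+q,m+q)))"
    unfolding twist_part_eq using rs by (intro sum_sum_cong) (simp add: upper_def lower_def algebra_simps)
  also have "\<dots> = (\<Sum>p<m. of_nat m * (?c * (Y $$ (p,p) * (U $$ (r,p) * cnj (U $$ (s,p))))))
      + ?c * ((\<Sum>p<m. U $$ (r,p) * cnj (U $$ (s,p))) * trace_lower m Y)"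
    by (simp add: sum.distrib trace_lower_def sum_distrib_left sum_distrib_right mult_ac)
  also have "\<dots> = (\<Sum>p<m. Y $$ (p,p) * (U $$ (r,p) * cnj (U $$ (s,p))))
      + (if r = s then ?c * trace_lower m Y else 0)"
    using m by (simp add: unitary_row_orthonormal[OF U rs])
  finally show ?thesis .
qed

lemma twist_part_ll: assumes U: "U \<in> carrier_mat m m" "U * adj U = 1\<^sub>m m" and rs: "r < m" "s < m"
  shows "twist_part m U Y (m+r) (m+s) = (\<Sum>q<m. Y $$ (m+q,m+q) * (U $$ (r,q) * cnj (U $$ (s,q))))
      + (if r = s then complex_of_real (1/real m) * trace_upper m Y else 0)"
proof -
  let ?c = "complex_of_real (1/real m)"
  have m: "0 < m" using rs by simp
  have "twist_part m U Y (m+r) (m+s) = (\<Sum>p<m. \<Sum>q<m. ?c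
      * (U $$ (r,q) * cnj (U $$ (s,q)) * Y $$ (p,p)) + ?c * (Y $$ (m+q,m+q) * (U $$ (r,q) * cnj (U $$ (s,q)))))"
    unfolding twist_part_eq using rs by (intro sum_sum_cong) (simp add: upper_def lower_def algebra_simps)
  also have "\<dots> = ?c * ((\<Sum>q<m. U $$ (r,q) * cnj (U $$ (s,q))) * trace_upper m Y)
      + (\<Sum>q<m. of_nat m * (?c * (Y $$ (m+q,m+q) * (U $$ (r,q) * cnj (U $$ (s,q))))))"
    by (simp add: sum.distrib trace_upper_def sum_distrib_left sum_distrib_right mult_ac, rule sum.swap)
  also have "\<dots> = (\<Sum>q<m. Y $$ (m+q,m+q) * (U $$ (r,q) * cnj (U $$ (s,q))))
      + (if r = s then ?c * trace_upper m Y else 0)"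
    using m by (simp add: unitary_row_orthonormal[OF U rs])
  finally show ?thesis .
qed

lemma twist_part_ul: assumes rs: "r < m" "s < m"
  shows "twist_part m U Y r (m+s) = - complex_of_real (1/real m)
      * (\<Sum>q<m. (\<Sum>p<m. U $$ (r,p) * Y $$ (m+q,p)) * cnj (U $$ (s,q)))"
proof -
  let ?c = "complex_of_real (1/real m)"
  have "twist_part m U Y r (m+s) = (\<Sum>p<m. \<Sum>q<m. - (?c * (U $$ (r,p) * Y $$ (m+q,p) * cnj (U $$ (s,q)))))"
    unfolding twist_part_eq using rs by (intro sum_sum_cong) (simp add: upper_def lower_def)
  also have "\<dots> = (\<Sum>q<m. \<Sum>p<m. - (?c * (U $$ (r,p) * Y $$ (m+q,p) * cnj (U $$ (s,q)))))"
    by (rule sum.swap)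
  also have "\<dots> = - ?c * (\<Sum>q<m. (\<Sum>p<m. U $$ (r,p) * Y $$ (m+q,p)) * cnj (U $$ (s,q)))"
    by (simp add: sum_distrib_left sum_distrib_right sum_negf)
  finally show ?thesis .
qed

lemma twist_part_lu: assumes rs: "r < m" "s < m"
  shows "twist_part m U Y (m+r) s = - complex_of_real (1/real m)
      * (\<Sum>q<m. (\<Sum>p<m. U $$ (r,p) * Y $$ (q,m+p)) * cnj (U $$ (s,q)))"
proof -
  let ?c = "complex_of_real (1/real m)"
  have "twist_part m U Y (m+r) s = (\<Sum>q<m. \<Sum>p<m. - (?c * (U $$ (r,p) * Y $$ (q,m+p) * cnj (U $$ (s,q)))))"
    unfolding twist_part_eq using rs by (intro sum_sum_cong) (simp add: upper_def lower_def)
  also have "\<dots> = - ?c * (\<Sum>q<m. (\<Sum>p<m. U $$ (r,p) * Y $$ (q,m+p)) * cnj (U $$ (s,q)))"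
    by (simp add: sum_distrib_left sum_distrib_right sum_negf)
  finally show ?thesis .
qed

definition meas_ket :: "nat \<Rightarrow> nat \<Rightarrow> nat \<Rightarrow> complex" where
  "meas_ket a w = (if w = 0 then ket a else (\<lambda>x. 0))"

definition prep_complement :: "complex mat \<Rightarrow> nat \<Rightarrow> nat \<Rightarrow> nat \<Rightarrow> complex" where
  "prep_complement U p j x = (if p = j then 0 else ket j x - cnj (U $$ (j,p)) * U $$ (x,p))"

lemma sum_root4_meas_ket:
  fixes f :: "nat \<Rightarrow> complex"
  assumes "a < n"
  shows "(\<Sum>w<4. c * qform n Y (meas_ket a w) * f w) = c * Y $$ (a,a) * f 0"
proof -
  have "(\<Sum>w<4. c * qform n Y (meas_ket a w) * f w)
      = (\<Sum>w<(4::nat). if w = 0 then c * Y $$ (a,a) * f 0 else 0)"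
    by (intro sum.cong refl) (simp add: meas_ket_def qform_ket[OF assms] qform_zero)
  then show ?thesis by simp
qed

definition compl_upper_part :: "nat \<Rightarrow> complex mat \<Rightarrow> complex mat \<Rightarrow> nat \<Rightarrow> nat \<Rightarrow> complex" where
  "compl_upper_part m U Y r s = (\<Sum>p<m. \<Sum>j<m. \<Sum>w<4. complex_of_real 1
     * qform (2*m) Y (meas_ket p w) * upper m (prep_complement U p j) r * cnj (upper m (prep_complement U p j) s))"

definition ident_lower_part :: "nat \<Rightarrow> complex mat \<Rightarrow> nat \<Rightarrow> nat \<Rightarrow> complex" where
  "ident_lower_part m Y r s = (\<Sum>p<m. \<Sum>j<m. \<Sum>w<4. complex_of_real (1 - 1/real m)
     * qform (2*m) Y (meas_ket p w) * lower m (ket j) r * cnj (lower m (ket j) s))"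

definition ident_upper_part :: "nat \<Rightarrow> complex mat \<Rightarrow> nat \<Rightarrow> nat \<Rightarrow> complex" where
  "ident_upper_part m Y r s = (\<Sum>p<m. \<Sum>j<m. \<Sum>w<4. complex_of_real (1 - 1/real m)
     * qform (2*m) Y (meas_ket (m+p) w) * upper m (ket j) r * cnj (upper m (ket j) s))"

definition compl_lower_part :: "nat \<Rightarrow> complex mat \<Rightarrow> complex mat \<Rightarrow> nat \<Rightarrow> nat \<Rightarrow> complex" where
  "compl_lower_part m U Y r s = (\<Sum>p<m. \<Sum>j<m. \<Sum>w<4. complex_of_real 1
     * qform (2*m) Y (meas_ket (m+p) w) * lower m (prep_complement U p j) r
         * cnj (lower m (prep_complement U p j) s))"

lemma compl_upper_part_eq:
  "compl_upper_part m U Y r s = (\<Sum>p<m. \<Sum>j<m.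
     Y $$ (p,p) * (upper m (prep_complement U p j) r * cnj (upper m (prep_complement U p j) s)))"
  unfolding compl_upper_part_def
  by (intro sum.cong refl)
    (subst sum_root4_meas_ket[where f="\<lambda>w. upper m (prep_complement U _ _) r
       * cnj (upper m (prep_complement U _ _) s)", simplified mult.assoc[symmetric]]; simp)

lemma ident_lower_part_eq:
  "ident_lower_part m Y r s = (\<Sum>p<m. \<Sum>j<m.
     complex_of_real (1 - 1/real m) * Y $$ (p,p) * (lower m (ket j) r * cnj (lower m (ket j) s)))"
  unfolding ident_lower_part_def
  by (intro sum.cong refl)
    (subst sum_root4_meas_ket[where f="\<lambda>w. lower m (ket _) r * cnj (lower m (ket _) s)",
       simplified mult.assoc[symmetric]]; simp)

lemma ident_upper_part_eq:
  "ident_upper_part m Y r s = (\<Sum>p<m. \<Sum>j<m.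
     complex_of_real (1 - 1/real m) * Y $$ (m+p,m+p) * (upper m (ket j) r * cnj (upper m (ket j) s)))"
  unfolding ident_upper_part_def
  by (intro sum.cong refl)
    (subst sum_root4_meas_ket[where f="\<lambda>w. upper m (ket _) r * cnj (upper m (ket _) s)",
       simplified mult.assoc[symmetric]]; simp)

lemma compl_lower_part_eq:
  "compl_lower_part m U Y r s = (\<Sum>p<m. \<Sum>j<m.
     Y $$ (m+p,m+p) * (lower m (prep_complement U p j) r * cnj (lower m (prep_complement U p j) s)))"
  unfolding compl_lower_part_def
  by (intro sum.cong refl)
    (subst sum_root4_meas_ket[where f="\<lambda>w. lower m (prep_complement U _ _) r
       * cnj (lower m (prep_complement U _ _) s)", simplified mult.assoc[symmetric]]; simp)

text \<open>For \<open>j \<noteq> p\<close>, \<open>prep_complement U p j\<close> is \<open>e\<^sub>j\<close> projected orthogonally to the unit vector \<open>U e\<^sub>p\<close>.\<close>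

lemma sum_prep_complement:
  assumes U: "U \<in> carrier_mat m m" "U * adj U = 1\<^sub>m m" "transpose_mat U = - U"
    and prs: "p < m" "r < m" "s < m"
  shows "(\<Sum>j<m. prep_complement U p j r * cnj (prep_complement U p j s)) =
    (if r = s then 1 else 0) - (if r = p \<and> s = p then 1 else 0) - U $$ (r,p) * cnj (U $$ (s,p))"
proof -
  let ?X = "\<lambda>j. (ket j r - cnj (U $$ (j,p)) * U $$ (r,p)) * (ket j s - U $$ (j,p) * cnj (U $$ (s,p)))"
  have "(\<Sum>j<m. prep_complement U p j r * cnj (prep_complement U p j s)) = (\<Sum>j<m. if p = j then 0 else ?X j)"
    by (intro sum.cong refl) (simp add: prep_complement_def)
  also have "\<dots> = (\<Sum>j<m. ?X j) - ?X p" by (rule sum_if_eq_zero[OF prs(1)])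
  also have "?X p = ket p r * ket p s" using antisym_diag_zero[OF U(1) U(3) prs(1)] by simp
  also have "(\<Sum>j<m. ?X j) = (\<Sum>j<m. ket j r * ket j s) - (\<Sum>j<m. ket j r * U $$ (j,p)) * cnj (U $$ (s,p))
       - (\<Sum>j<m. ket j s * cnj (U $$ (j,p))) * U $$ (r,p)
           + (\<Sum>j<m. cnj (U $$ (j,p)) * U $$ (j,p)) * (U $$ (r,p) * cnj (U $$ (s,p)))"
    by (simp add: algebra_simps sum.distrib sum_subtractf sum_distrib_left sum_distrib_right)
  also have "\<dots> = (if r = s then 1 else 0) - U $$ (r,p) * cnj (U $$ (s,p))"
    using prs unfolding antisym_unitary_col_norm[OF U prs(1)] by (simp add: ket_mult algebra_simps, simp add: ket_def)
  finally show ?thesis using prs by (simp add: ket_def)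
qed

lemma compl_upper_part_uu:
  assumes U: "U \<in> carrier_mat m m" "U * adj U = 1\<^sub>m m" "transpose_mat U = - U" and rs: "r < m" "s < m"
  shows "compl_upper_part m U Y r s = (\<Sum>p<m. Y $$ (p,p)
      * ((if r = s then 1 else 0) - (if r = p \<and> s = p then 1 else 0) - U $$ (r,p) * cnj (U $$ (s,p))))"
  unfolding compl_upper_part_eq
proof (intro sum.cong refl)
  fix p assume "p \<in> {..<m}"
  then have p: "p < m" by simp
  have "(\<Sum>j<m. Y $$ (p,p) * (upper m (prep_complement U p j) r
      * cnj (upper m (prep_complement U p j) s)))
      = Y $$ (p,p) * (\<Sum>j<m. prep_complement U p j r * cnj (prep_complement U p j s))"
    using rs by (simp add: upper_def sum_distrib_left)
  also have "\<dots> = Y $$ (p,p) * ((if r = s then 1 else 0) - (if r = p \<and> s = p then 1 else 0)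
      - U $$ (r,p) * cnj (U $$ (s,p)))"
    by (simp only: sum_prep_complement[OF U p rs])
  finally show "(\<Sum>j<m. Y $$ (p,p) * (upper m (prep_complement U p j) r
      * cnj (upper m (prep_complement U p j) s))) = \<dots>" .
qed

lemma compl_lower_part_ll:
  assumes U: "U \<in> carrier_mat m m" "U * adj U = 1\<^sub>m m" "transpose_mat U = - U" and rs: "r < m" "s < m"
  shows "compl_lower_part m U Y (m+r) (m+s) =
      (\<Sum>p<m. Y $$ (m+p,m+p) * ((if r = s then 1 else 0) - (if r = p \<and> s = p then 1 else 0)
      - U $$ (r,p) * cnj (U $$ (s,p))))"
  unfolding compl_lower_part_eq
proof (intro sum.cong refl)
  fix p assume "p \<in> {..<m}"
  then have p: "p < m" by simp
  have "(\<Sum>j<m. Y $$ (m+p,m+p) * (lower m (prep_complement U p j) (m+r)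
      * cnj (lower m (prep_complement U p j) (m+s))))
      = Y $$ (m+p,m+p) * (\<Sum>j<m. prep_complement U p j r * cnj (prep_complement U p j s))"
    using rs by (simp add: lower_def sum_distrib_left)
  also have "\<dots> = Y $$ (m+p,m+p) * ((if r = s then 1 else 0) - (if r = p \<and> s = p then 1 else 0)
      - U $$ (r,p) * cnj (U $$ (s,p)))"
    by (simp only: sum_prep_complement[OF U p rs])
  finally show "(\<Sum>j<m. Y $$ (m+p,m+p) * (lower m (prep_complement U p j) (m+r)
      * cnj (lower m (prep_complement U p j) (m+s)))) = \<dots>" .
qed

lemma compl_upper_part_outside: "m \<le> r \<or> m \<le> s \<Longrightarrow> compl_upper_part m U Y r s = 0"
  unfolding compl_upper_part_eq by (auto simp: upper_def)

lemma compl_lower_part_outside: "r < m \<or> s < m \<Longrightarrow> compl_lower_part m U Y r s = 0"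
  unfolding compl_lower_part_eq by (auto simp: lower_def)

lemma ident_lower_part_outside: "r < m \<or> s < m \<Longrightarrow> ident_lower_part m Y r s = 0"
  unfolding ident_lower_part_eq by (auto simp: lower_def)

lemma ident_upper_part_outside: "m \<le> r \<or> m \<le> s \<Longrightarrow> ident_upper_part m Y r s = 0"
  unfolding ident_upper_part_eq by (auto simp: upper_def)

lemma ident_lower_part_ll: assumes rs: "r < m" "s < m"
  shows "ident_lower_part m Y (m+r) (m+s) = complex_of_real (1 - 1/real m) * (if r = s then trace_upper m Y else 0)"
proof (cases "r = s")
  case True
  have "ident_lower_part m Y (m+r) (m+s)
      = (\<Sum>p<m. \<Sum>j<m. if j = r then complex_of_real (1 - 1/real m) * Y $$ (p,p) else 0)"
    unfolding ident_lower_part_eq using rs True by (intro sum_sum_cong) (simp add: lower_def ket_def)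
  also have "\<dots> = complex_of_real (1 - 1/real m) * trace_upper m Y"
    using rs by (simp add: sum_sum_if_snd trace_upper_def sum_distrib_left)
  finally show ?thesis using True by simp
next
  case False
  have "ident_lower_part m Y (m+r) (m+s)
      = (\<Sum>p<m. \<Sum>j<m. 0)"
    unfolding ident_lower_part_eq using rs False by (intro sum_sum_cong) (simp add: lower_def ket_def)
  then show ?thesis using False by simp
qed

lemma ident_upper_part_uu: assumes rs: "r < m" "s < m"
  shows "ident_upper_part m Y r s = complex_of_real (1 - 1/real m) * (if r = s then trace_lower m Y else 0)"
proof (cases "r = s")
  case True
  have "ident_upper_part m Y r s
      = (\<Sum>p<m. \<Sum>j<m. if j = r then complex_of_real (1 - 1/real m) * Y $$ (m+p,m+p) else 0)"
    unfolding ident_upper_part_eq using rs True by (intro sum_sum_cong) (simp add: upper_def ket_def)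
  also have "\<dots> = complex_of_real (1 - 1/real m) * trace_lower m Y"
    using rs by (simp add: sum_sum_if_snd trace_lower_def sum_distrib_left)
  finally show ?thesis using True by simp
next
  case False
  have "ident_upper_part m Y r s
      = (\<Sum>p<m. \<Sum>j<m. 0)"
    unfolding ident_upper_part_eq using rs False by (intro sum_sum_cong) (simp add: upper_def ket_def)
  then show ?thesis using False by simp
qed

text \<open>The terms of the decomposition of \<open>Tr(\<cdot>) I + PhiU\<close> on \<open>\<complex>\<^sup>m \<oplus> \<complex>\<^sup>m\<close>, indexed by \<open>(f, i, j, w)\<close>.
  Families \<open>f = 0, 1\<close> measure \<open>e\<^sub>i + \<omega> e\<^sub>m\<^sub>+\<^sub>j\<close> and produce the off-diagonal blocks \<open>-X\<^sub>1\<^sub>2\<close> and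
  \<open>-U X\<^sub>2\<^sub>1\<^sup>T U\<^sup>\<dagger>\<close>; families \<open>f = 2, \<dots>, 5\<close> measure a diagonal entry and only their
  \<open>w = 0\<close> terms are nonzero, the index \<open>w\<close> being kept to make the index set a product.\<close>

definition decomp_index :: "nat \<Rightarrow> (nat \<times> nat \<times> nat \<times> nat) set" where
  "decomp_index m = {..<6} \<times> {..<m} \<times> {..<m} \<times> {..<4}"

definition decomp_meas :: "nat \<Rightarrow> nat \<times> nat \<times> nat \<times> nat \<Rightarrow> nat \<Rightarrow> complex" where
  "decomp_meas m t = (case t of (f,i,j,w) \<Rightarrow>
     if f \<le> 1 then meas_pair m i j w else if f \<le> 3 then meas_ket i w else meas_ket (m+i) w)"

definition decomp_prep :: "nat \<Rightarrow> complex mat \<Rightarrow> nat \<times> nat \<times> nat \<times> nat \<Rightarrow> nat \<Rightarrow> complex" where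
  "decomp_prep m U t = (case t of (f,i,j,w) \<Rightarrow>
     if f = 0 then prep_pair m i j w else if f = 1 then prep_unitary_pair m U i j w
     else if f = 2 then upper m (prep_complement U i j) else if f = 3 then lower m (ket j)
     else if f = 4 then upper m (ket j) else lower m (prep_complement U i j))"

definition decomp_weight :: "nat \<Rightarrow> nat \<times> nat \<times> nat \<times> nat \<Rightarrow> real" where
  "decomp_weight m t = (case t of (f,i,j,w) \<Rightarrow>
     if f \<le> 1 then 1/real (4*m) else if f = 2 \<or> f = 5 then 1 else 1 - 1/real m)"

lemma sum_decomp_index: "(\<Sum>t\<in>decomp_index m. g t)
    = (\<Sum>f<6. \<Sum>i<m. \<Sum>j<m. \<Sum>w<4. g (f,i,j,w))"
  unfolding decomp_index_def by (simp add: sum.cartesian_product)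

lemma lessThan_6_eq: "{..<6::nat} = {0,1,2,3,4,5}" by auto

lemma sum_decomp_parts: "(\<Sum>t\<in>decomp_index m. complex_of_real (decomp_weight m t)
    * qform (2*m) Y (decomp_meas m t) * decomp_prep m U t r * cnj (decomp_prep m U t s))
  = cross_part m Y r s + twist_part m U Y r s + compl_upper_part m U Y r s + ident_lower_part m Y r s
      + ident_upper_part m Y r s + compl_lower_part m U Y r s"
  unfolding sum_decomp_index lessThan_6_eq
  by (simp add: cross_part_def twist_part_def compl_upper_part_def ident_lower_part_def ident_upper_part_def
      compl_lower_part_def decomp_meas_def decomp_prep_def decomp_weight_def)

lemma of_real_inverse_of_nat: "complex_of_real (1/real m) = 1 / of_nat m" by simp

lemma of_real_one_minus_inverse_of_nat: "complex_of_real (1 - 1/real m) = 1 - 1 / of_nat m" by simp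

lemma decomp_parts_uu:
  assumes m: "m = 2*N" and U: "U \<in> carrier_mat m m" "U * adj U = 1\<^sub>m m" "transpose_mat U = - U"
    and Y: "Y \<in> carrier_mat (2*m) (2*m)" and rs: "r < m" "s < m"
  shows "cross_part m Y r s + twist_part m U Y r s + compl_upper_part m U Y r s + ident_lower_part m Y r s
      + ident_upper_part m Y r s + compl_lower_part m U Y r s
    = PhiU N U Y $$ (r,s) + (if r = s then mtrace Y else 0)"
proof -
  have z: "ident_lower_part m Y r s = 0" "compl_lower_part m U Y r s = 0" using rs
      by (simp_all add: ident_lower_part_outside compl_lower_part_outside)
  have compl_eq: "compl_upper_part m U Y r s = (if r = s then trace_upper m Y else 0)
      - (if r = s then Y $$ (r,r) else 0) - (\<Sum>p<m. Y $$ (p,p) * (U $$ (r,p) * cnj (U $$ (s,p))))"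
    unfolding compl_upper_part_uu[OF U rs] using rs
    by (simp add: right_diff_distrib sum_subtractf sum_mult_if_diag sum_if_diag trace_upper_def)
  show ?thesis
    unfolding z compl_eq cross_part_uu[OF rs] twist_part_uu[OF U(1,2) rs] ident_upper_part_uu[OF rs]
        PhiU_uu[OF m rs] mtrace_upper_lower[OF Y] of_real_inverse_of_nat of_real_one_minus_inverse_of_nat
    by (simp add: algebra_simps)
qed

lemma decomp_parts_ll:
  assumes m: "m = 2*N" and U: "U \<in> carrier_mat m m" "U * adj U = 1\<^sub>m m" "transpose_mat U = - U"
    and Y: "Y \<in> carrier_mat (2*m) (2*m)" and rs: "r < m" "s < m"
  shows "cross_part m Y (m+r) (m+s) + twist_part m U Y (m+r) (m+s) + compl_upper_part m U Y (m+r) (m+s)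
      + ident_lower_part m Y (m+r) (m+s) + ident_upper_part m Y (m+r) (m+s) + compl_lower_part m U Y (m+r) (m+s)
    = PhiU N U Y $$ (m+r,m+s) + (if m+r = m+s then mtrace Y else 0)"
proof -
  have z: "compl_upper_part m U Y (m+r) (m+s) = 0" "ident_upper_part m Y (m+r) (m+s) = 0"
      by (simp_all add: compl_upper_part_outside ident_upper_part_outside)
  have compl_eq: "compl_lower_part m U Y (m+r) (m+s)
      = (if r = s then trace_lower m Y else 0) - (if r = s then Y $$ (m+r,m+r) else 0)
      - (\<Sum>p<m. Y $$ (m+p,m+p) * (U $$ (r,p) * cnj (U $$ (s,p))))"
    unfolding compl_lower_part_ll[OF U rs] using rs
    by (simp add: right_diff_distrib sum_subtractf sum_mult_if_diag sum_if_diag trace_lower_def)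
  show ?thesis
    unfolding z compl_eq cross_part_ll[OF rs] twist_part_ll[OF U(1,2) rs] ident_lower_part_ll[OF rs]
        PhiU_ll[OF m rs] mtrace_upper_lower[OF Y] of_real_inverse_of_nat of_real_one_minus_inverse_of_nat
    by (simp add: algebra_simps)
qed

lemma decomp_parts_ul:
  assumes m: "m = 2*N" and U: "U \<in> carrier_mat m m" and rs: "r < m" "s < m"
  shows "cross_part m Y r (m+s) + twist_part m U Y r (m+s) + compl_upper_part m U Y r (m+s)
      + ident_lower_part m Y r (m+s) + ident_upper_part m Y r (m+s) + compl_lower_part m U Y r (m+s)
    = PhiU N U Y $$ (r,m+s) + (if r = m+s then mtrace Y else 0)"
  using rs unfolding cross_part_ul[OF rs] twist_part_ul[OF rs] PhiU_ul[OF m U rs] of_real_inverse_of_nat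
  by (simp add: compl_upper_part_outside ident_lower_part_outside ident_upper_part_outside
      compl_lower_part_outside algebra_simps)

lemma decomp_parts_lu:
  assumes m: "m = 2*N" and U: "U \<in> carrier_mat m m" and rs: "r < m" "s < m"
  shows "cross_part m Y (m+r) s + twist_part m U Y (m+r) s + compl_upper_part m U Y (m+r) s
      + ident_lower_part m Y (m+r) s + ident_upper_part m Y (m+r) s + compl_lower_part m U Y (m+r) s
    = PhiU N U Y $$ (m+r,s) + (if m+r = s then mtrace Y else 0)"
  using rs unfolding cross_part_lu[OF rs] twist_part_lu[OF rs] PhiU_lu[OF m U rs] of_real_inverse_of_nat
  by (simp add: compl_upper_part_outside ident_lower_part_outside ident_upper_part_outside
      compl_lower_part_outside algebra_simps)

definition decomp_entry :: "nat \<Rightarrow> complex mat \<Rightarrow> complex mat \<Rightarrow> nat \<Rightarrow> nat \<Rightarrow> complex" where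
  "decomp_entry m U Y r s = (\<Sum>t\<in>decomp_index m. complex_of_real (decomp_weight m t)
      * qform (2*m) Y (decomp_meas m t) * decomp_prep m U t r * cnj (decomp_prep m U t s))"

lemma decomp_entry_eq:
  assumes m: "m = 2*N" and U: "U \<in> carrier_mat m m" "U * adj U = 1\<^sub>m m" "transpose_mat U = - U"
    and Y: "Y \<in> carrier_mat (2*m) (2*m)" and rs: "r < 2*m" "s < 2*m"
  shows "decomp_entry m U Y r s = PhiU N U Y $$ (r,s) + (if r = s then mtrace Y else 0)"
proof -
  have L: "decomp_entry m U Y r s = cross_part m Y r s + twist_part m U Y r s + compl_upper_part m U Y r s
      + ident_lower_part m Y r s + ident_upper_part m Y r s + compl_lower_part m U Y r s"
    unfolding decomp_entry_def by (rule sum_decomp_parts)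
  show ?thesis
  proof (cases "r < m")
    case r: True
    show ?thesis
    proof (cases "s < m")
      case True show ?thesis unfolding L by (rule decomp_parts_uu[OF m U Y r True])
    next
      case False
      then obtain s' where s': "s = m + s'" "s' < m" using rs
          by (metis add_diff_inverse_nat add_less_imp_less_left mult_2)
      show ?thesis unfolding L unfolding s'(1) by (rule decomp_parts_ul[OF m U(1) r s'(2)])
    qed
  next
    case False
    then obtain r' where r': "r = m + r'" "r' < m" using rs
        by (metis add_diff_inverse_nat add_less_imp_less_left mult_2)
    show ?thesis
    proof (cases "s < m")
      case True show ?thesis unfolding L unfolding r'(1) by (rule decomp_parts_lu[OF m U(1) r'(2) True])
    next
      case False
      then obtain s' where s': "s = m + s'" "s' < m" using rs
          by (metis add_diff_inverse_nat add_less_imp_less_left mult_2)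
      show ?thesis unfolding L unfolding r'(1) s'(1) by (rule decomp_parts_ll[OF m U Y r'(2) s'(2)])
    qed
  qed
qed

section \<open>The critical parameter\<close>

lemma index_PhiTilde_decomp:
  assumes N: "N \<ge> 1" and U: "U \<in> carrier_mat (2*N) (2*N)" "U * adj U = 1\<^sub>m (2*N)"
      "transpose_mat U = - U"
    and Y: "Y \<in> carrier_mat (4*N) (4*N)" and rs: "r < 4*N" "s < 4*N"
  shows "PhiTilde N U p Y $$ (r,s) = (complex_of_real p / of_nat (4*N) - complex_of_real (1-p)) * mtrace Y
      * (if r = s then 1 else 0)
     + complex_of_real (1 - p) * decomp_entry (2*N) U Y r s"
proof -
  have Y': "Y \<in> carrier_mat (2*(2*N)) (2*(2*N))" using Y by simp
  have rs': "r < 2*(2*N)" "s < 2*(2*N)" using rs by auto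
  show ?thesis unfolding index_PhiTilde[OF rs] decomp_entry_eq[OF refl U Y' rs']
    by (simp add: algebra_simps)
qed

lemma decomp_weight_nonneg: "1 \<le> m \<Longrightarrow> 0 \<le> decomp_weight m t"
  by (auto simp: decomp_weight_def split: prod.splits)

lemma critical_coefficients:
  assumes "0 < (n::nat)"
  shows "complex_of_real (real n / real (n+1)) / of_nat n - complex_of_real (1 - real n / real (n+1)) = 0"
    and "complex_of_real (1 - real n / real (n+1)) = complex_of_real (1 / real (n+1))"
proof -
  have c: "1 - real n / real (n+1) = 1 / real (n+1)" by (simp add: field_simps)
  have "complex_of_real (real n / real (n+1)) / of_nat n = complex_of_real (1 / real (n+1))"
    using assms by simp
  with c show "complex_of_real (real n / real (n+1)) / of_nat n - complex_of_real (1 - real n / real (n+1)) = 0"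
    by simp
  from c show "complex_of_real (1 - real n / real (n+1)) = complex_of_real (1 / real (n+1))" by simp
qed

lemma PhiTilde_critical_measure_prepare:
  assumes N: "N \<ge> 1" and U: "U \<in> carrier_mat (2*N) (2*N)" "U * adj U = 1\<^sub>m (2*N)"
      "transpose_mat U = - U"
  shows "measure_prepare (4*N) (decomp_index (2*N)) (\<lambda>t. decomp_weight (2*N) t / real (4*N+1))
           (decomp_meas (2*N)) (decomp_prep (2*N) U) (PhiTilde N U (real (4*N) / real (4*N + 1)))"
  unfolding measure_prepare_def
proof (intro conjI ballI allI impI)
  show "finite (decomp_index (2*N))" by (simp add: decomp_index_def)
  fix t show "0 \<le> decomp_weight (2*N) t / real (4*N+1)" using N decomp_weight_nonneg[of "2*N" t] by simp
next
  fix Y :: "complex mat" assume Y: "Y \<in> carrier_mat (4*N) (4*N)"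
  show "PhiTilde N U (real (4*N) / real (4*N + 1)) Y \<in> carrier_mat (4*N) (4*N)"
    by (rule PhiTilde_carrier_mat)
  fix r s assume rs: "r < 4*N" "s < 4*N"
  have n: "0 < 4*N" using N by simp
  show "PhiTilde N U (real (4*N) / real (4*N + 1)) Y $$ (r,s) =
    (\<Sum>t\<in>decomp_index (2*N). complex_of_real (decomp_weight (2*N) t / real (4*N+1)) *
       qform (4*N) Y (decomp_meas (2*N) t) * decomp_prep (2*N) U t r * cnj (decomp_prep (2*N) U t s))"
    unfolding index_PhiTilde_decomp[OF N U Y rs] critical_coefficients[OF n] decomp_entry_def
    using N by (simp add: sum_distrib_left mult.assoc)
qed

lemma cnj_root4_mult: "cnj (root4 w) * root4 w = 1"
  by (simp add: root4_def)

lemma sum_cnj_meas_pair: assumes "i < m" "j < m"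
  shows "(\<Sum>a<2*m. cnj (meas_pair m i j w a) * g a) = g i + cnj (root4 w) * g (m+j)"
proof -
  have "(\<Sum>a<2*m. cnj (meas_pair m i j w a) * g a) = (\<Sum>a<2*m. g a * (ket i a + cnj (root4 w) * ket (m+j) a))"
    by (intro sum.cong refl) (simp add: meas_pair_def mult.commute)
  also have "\<dots> = g i + cnj (root4 w) * g (m+j)" using assms by (intro sum_mult_ket_pair) auto
  finally show ?thesis .
qed

lemma sum_cnj_meas_ket: assumes "k < n"
  shows "(\<Sum>a<n. cnj (meas_ket k w a) * g a) = (if w = 0 then g k else 0)"
  using assms by (simp add: meas_ket_def ket_mult)

lemma decomp_meas_orthogonal_prep:
  assumes U: "U \<in> carrier_mat m m" "transpose_mat U = - U" and t: "t \<in> decomp_index m"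
  shows "(\<Sum>a<2*m. cnj (decomp_meas m t a) * decomp_prep m U t a) = 0"
proof -
  obtain f i j w where tt: "t = (f,i,j,w)" and f: "f < 6" and ij: "i < m" "j < m"
    using t unfolding decomp_index_def by auto
  have Uii: "U $$ (i,i) = 0" "U $$ (j,j) = 0" using antisym_diag_zero[OF U] ij by auto
  have zi: "prep_complement U i j i = 0" using Uii ij by (simp add: prep_complement_def ket_def)
  have "f = 0 \<or> f = 1 \<or> f = 2 \<or> f = 3 \<or> f = 4 \<or> f = 5" using f by auto
  then show ?thesis
  proof (elim disjE)
    assume "f = 0" then show ?thesis unfolding tt using ij
      by (simp add: decomp_meas_def decomp_prep_def sum_cnj_meas_pair prep_pair_def upper_def lower_def
          ket_def cnj_root4_mult)
  next
    assume "f = 1" then show ?thesis unfolding tt using ij Uii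
      by (simp add: decomp_meas_def decomp_prep_def sum_cnj_meas_pair prep_unitary_pair_def upper_def lower_def)
  next
    assume "f = 2" then show ?thesis unfolding tt using ij zi
      by (simp add: decomp_meas_def decomp_prep_def sum_cnj_meas_ket upper_def)
  next
    assume "f = 3" then show ?thesis unfolding tt using ij
      by (simp add: decomp_meas_def decomp_prep_def sum_cnj_meas_ket lower_def)
  next
    assume "f = 4" then show ?thesis unfolding tt using ij
      by (simp add: decomp_meas_def decomp_prep_def sum_cnj_meas_ket upper_def)
  next
    assume "f = 5" then show ?thesis unfolding tt using ij zi
      by (simp add: decomp_meas_def decomp_prep_def sum_cnj_meas_ket lower_def)
  qed
qed

lemma PhiTilde_Pplus_overlap:
  assumes N: "N \<ge> 1" and U: "U \<in> carrier_mat (2*N) (2*N)" "U * adj U = 1\<^sub>m (2*N)"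
      "transpose_mat U = - U"
  shows "(\<Sum>a<4*N. \<Sum>b<4*N. PhiTilde N U p (blk (4*N) (Pplus (4*N)) a b) $$ (a,b))
     = complex_of_real p / of_nat (4*N) - complex_of_real (1-p)"
proof -
  let ?n = "4*N" and ?m = "2*N"
  let ?c = "complex_of_real p / of_nat (4*N) - complex_of_real (1-p)"
  let ?f = "\<lambda>t a. cnj (decomp_meas ?m t a) * decomp_prep ?m U t a"
  have n: "0 < ?n" using N by simp
  have T: "PhiTilde N U p (blk ?n (Pplus ?n) a b) $$ (a,b) = ?c * (if a = b then 1 / of_nat ?n else 0)
      + complex_of_real (1-p) * (\<Sum>t\<in>decomp_index ?m. complex_of_real (decomp_weight ?m t)
          / of_nat ?n * (?f t a * cnj (?f t b)))"
    if ab: "a < ?n" "b < ?n" for a b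
  proof -
    have Y: "blk ?n (Pplus ?n) a b \<in> carrier_mat ?n ?n" by simp
    have K: "decomp_entry ?m U (blk ?n (Pplus ?n) a b) a b
        = (\<Sum>t\<in>decomp_index ?m. complex_of_real (decomp_weight ?m t) / of_nat ?n * (?f t a * cnj (?f t b)))"
      unfolding decomp_entry_def
    proof (intro sum.cong refl)
      fix t
      have "qform (2*?m) (blk ?n (Pplus ?n) a b) (decomp_meas ?m t)
          = cnj (decomp_meas ?m t a) * decomp_meas ?m t b / of_nat ?n"
        using qform_blk_Pplus[OF ab, of "decomp_meas ?m t"] by simp
      then show "complex_of_real (decomp_weight ?m t)
          * qform (2*?m) (blk ?n (Pplus ?n) a b) (decomp_meas ?m t) * decomp_prep ?m U t a
          * cnj (decomp_prep ?m U t b)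
          = complex_of_real (decomp_weight ?m t) / of_nat ?n * (?f t a * cnj (?f t b))"
        by (simp add: field_simps)
    qed
    show ?thesis unfolding index_PhiTilde_decomp[OF N U Y ab] K mtrace_blk_Pplus[OF ab] by simp
  qed
  have "(\<Sum>a<?n. \<Sum>b<?n. PhiTilde N U p (blk ?n (Pplus ?n) a b) $$ (a,b))
     = (\<Sum>a<?n. \<Sum>b<?n. ?c * (if a = b then 1 / of_nat ?n else 0))
       + complex_of_real (1-p) * (\<Sum>t\<in>decomp_index ?m. complex_of_real (decomp_weight ?m t)
           / of_nat ?n * ((\<Sum>a<?n. ?f t a) * cnj (\<Sum>b<?n. ?f t b)))"
  proof -
    have "(\<Sum>a<?n. \<Sum>b<?n. PhiTilde N U p (blk ?n (Pplus ?n) a b) $$ (a,b))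
      = (\<Sum>a<?n. \<Sum>b<?n. ?c * (if a = b then 1 / of_nat ?n else 0))
       + (\<Sum>a<?n. \<Sum>b<?n. complex_of_real (1-p)
           * (\<Sum>t\<in>decomp_index ?m. complex_of_real (decomp_weight ?m t) / of_nat ?n
           * (?f t a * cnj (?f t b))))"
      by (simp add: T sum.distrib)
    also have "(\<Sum>a<?n. \<Sum>b<?n. complex_of_real (1-p)
        * (\<Sum>t\<in>decomp_index ?m. complex_of_real (decomp_weight ?m t) / of_nat ?n * (?f t a * cnj (?f t b))))
       = complex_of_real (1-p) * (\<Sum>t\<in>decomp_index ?m. complex_of_real (decomp_weight ?m t)
           / of_nat ?n * ((\<Sum>a<?n. ?f t a) * cnj (\<Sum>b<?n. ?f t b)))"
      by (simp add: sum_distrib_left sum_distrib_right cnj_sum sum_product mult_ac, rule sum_sum_sum_swap)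
    finally show ?thesis .
  qed
  also have "(\<Sum>t\<in>decomp_index ?m. complex_of_real (decomp_weight ?m t) / of_nat ?n
      * ((\<Sum>a<?n. ?f t a) * cnj (\<Sum>b<?n. ?f t b))) = 0"
  proof (intro sum.neutral ballI)
    fix t assume t: "t \<in> decomp_index ?m"
    have "(\<Sum>a<2*?m. ?f t a) = 0" by (rule decomp_meas_orthogonal_prep[OF U(1,3) t])
    then show "complex_of_real (decomp_weight ?m t) / of_nat ?n
        * ((\<Sum>a<?n. ?f t a) * cnj (\<Sum>b<?n. ?f t b)) = 0" by simp
  qed
  also have "(\<Sum>a<?n. \<Sum>b<?n. ?c * (if a = b then 1 / of_nat ?n else 0)) = ?c"
    by (rule sum_sum_scaled_diag[OF n])
  finally show ?thesis by simp
qed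

lemma PhiTilde_completely_positive_imp_critical_le:
  assumes N: "N \<ge> 1" and U: "U \<in> carrier_mat (2*N) (2*N)" "U * adj U = 1\<^sub>m (2*N)"
      "transpose_mat U = - U"
    and cp: "completely_positive (4*N) (PhiTilde N U p)"
  shows "real (4*N) / real (4*N + 1) \<le> p"
proof -
  let ?n = "4*N"
  have n: "0 < ?n" using N by simp
  have "psd (?n*?n) (id_tensor ?n ?n (PhiTilde N U p) (Pplus ?n))"
    using cp psd_Pplus unfolding completely_positive_def positive_map_def by blast
  then have "0 \<le> Re (qform (?n*?n) (id_tensor ?n ?n (PhiTilde N U p) (Pplus ?n))
                       (\<lambda>I. if I div ?n = I mod ?n then 1 else 0))"
    by (rule psd_qform_nonneg)
  also have "qform (?n*?n) (id_tensor ?n ?n (PhiTilde N U p) (Pplus ?n))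
      (\<lambda>I. if I div ?n = I mod ?n then 1 else 0)
      = complex_of_real p / of_nat ?n - complex_of_real (1-p)"
    unfolding qform_id_tensor_Pplus[OF n] by (rule PhiTilde_Pplus_overlap[OF N U])
  finally have "0 \<le> p / real ?n - (1 - p)" by simp
  with n show ?thesis by (simp add: field_simps)
qed

lemma PhiTilde_Choi_eq:
  assumes N: "N \<ge> 1"
  shows "complex_of_real (p / real ((4*N)^2)) \<cdot>\<^sub>m 1\<^sub>m ((4*N)*(4*N))
      + complex_of_real (1 - p) \<cdot>\<^sub>m id_tensor (4*N) (4*N) (PhiU N U) (Pplus (4*N))
     = id_tensor (4*N) (4*N) (PhiTilde N U p) (Pplus (4*N))"
proof (rule eq_matI)
  let ?n = "4*N"
  have C: "id_tensor ?n ?n (PhiTilde N U p) (Pplus ?n) \<in> carrier_mat (?n*?n) (?n*?n)" by (rule index_id_tensor)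
  have C2: "id_tensor ?n ?n (PhiU N U) (Pplus ?n) \<in> carrier_mat (?n*?n) (?n*?n)" by (rule index_id_tensor)
  show "dim_row (complex_of_real (p / real ((4*N)^2)) \<cdot>\<^sub>m 1\<^sub>m ((4*N)*(4*N))
      + complex_of_real (1 - p) \<cdot>\<^sub>m id_tensor (4*N) (4*N) (PhiU N U) (Pplus (4*N)))
     = dim_row (id_tensor ?n ?n (PhiTilde N U p) (Pplus ?n))" using C C2 by simp
  show "dim_col (complex_of_real (p / real ((4*N)^2)) \<cdot>\<^sub>m 1\<^sub>m ((4*N)*(4*N))
      + complex_of_real (1 - p) \<cdot>\<^sub>m id_tensor (4*N) (4*N) (PhiU N U) (Pplus (4*N)))
     = dim_col (id_tensor ?n ?n (PhiTilde N U p) (Pplus ?n))" using C C2 by simp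
  fix I J assume "I < dim_row (id_tensor ?n ?n (PhiTilde N U p) (Pplus ?n))" "J < dim_col
      (id_tensor ?n ?n (PhiTilde N U p) (Pplus ?n))"
  then have IJ: "I < ?n*?n" "J < ?n*?n" using C by auto
  have n: "0 < ?n" using IJ by (cases "?n") auto
  have dv: "I div ?n < ?n" "J div ?n < ?n" "I mod ?n < ?n" "J mod ?n < ?n" using IJ n
      by (simp_all add: less_mult_imp_div_less)
  have e: "complex_of_real (p / real ((4*N)^2)) * (if I = J then 1 else 0)
     = complex_of_real p * mtrace (blk ?n (Pplus ?n) (I div ?n) (J div ?n)) / of_nat ?n
         * (if I mod ?n = J mod ?n then 1 else 0)"
    unfolding mtrace_blk_Pplus[OF dv(1,2)] nat_eq_iff_div_mod_eq[of I J ?n] by (auto simp: power2_eq_square)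
  show "(complex_of_real (p / real ((4*N)^2)) \<cdot>\<^sub>m 1\<^sub>m ((4*N)*(4*N))
      + complex_of_real (1 - p) \<cdot>\<^sub>m id_tensor (4*N) (4*N) (PhiU N U) (Pplus (4*N))) $$ (I,J)
     = id_tensor ?n ?n (PhiTilde N U p) (Pplus ?n) $$ (I,J)"
  proof -
    have L: "(complex_of_real (p / real ((4*N)^2)) \<cdot>\<^sub>m 1\<^sub>m ((4*N)*(4*N))
        + complex_of_real (1 - p) \<cdot>\<^sub>m id_tensor (4*N) (4*N) (PhiU N U) (Pplus (4*N))) $$ (I,J)
      = complex_of_real (p / real ((4*N)^2)) * (if I = J then 1 else 0)
          + complex_of_real (1 - p) * id_tensor (4*N) (4*N) (PhiU N U) (Pplus (4*N)) $$ (I,J)"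
      using IJ C2 by simp
    have R: "id_tensor ?n ?n (PhiTilde N U p) (Pplus ?n) $$ (I,J)
        = complex_of_real p * mtrace (blk ?n (Pplus ?n) (I div ?n) (J div ?n)) / of_nat ?n
        * (if I mod ?n = J mod ?n then 1 else 0)
       + complex_of_real (1 - p) * PhiU N U (blk ?n (Pplus ?n) (I div ?n) (J div ?n)) $$ (I mod ?n, J mod ?n)"
      by (simp only: index_id_tensor(1)[OF IJ] index_PhiTilde[OF dv(3,4)])
    have T: "id_tensor (4*N) (4*N) (PhiU N U) (Pplus (4*N)) $$ (I,J)
        = PhiU N U (blk ?n (Pplus ?n) (I div ?n) (J div ?n)) $$ (I mod ?n, J mod ?n)"
      by (rule index_id_tensor(1)[OF IJ])
    show ?thesis unfolding L R T e ..
  qed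
qed

lemma mtrace_PhiTilde_Choi:
  assumes N: "N \<ge> 1"
  shows "mtrace (id_tensor (4*N) (4*N) (PhiTilde N U p) (Pplus (4*N))) = 1"
proof -
  let ?n = "4*N"
  have n: "0 < ?n" using N by simp
  have "mtrace (id_tensor ?n ?n (PhiTilde N U p) (Pplus ?n))
      = (\<Sum>I<?n*?n. id_tensor ?n ?n (PhiTilde N U p) (Pplus ?n) $$ (I,I))"
    unfolding mtrace_def using index_id_tensor(2)[of ?n ?n "PhiTilde N U p" "Pplus ?n"] by simp
  also have "\<dots> = (\<Sum>a<?n. \<Sum>i<?n. id_tensor ?n ?n (PhiTilde N U p) (Pplus ?n) $$ (a*?n+i, a*?n+i))"
    by (rule sum_lessThan_mult_blocks)
  also have "\<dots> = (\<Sum>a<?n. \<Sum>i<?n. PhiTilde N U p (blk ?n (Pplus ?n) a a) $$ (i,i))"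
  proof (intro sum.cong refl)
    fix a i assume "a \<in> {..<?n}" "i \<in> {..<?n}"
    then have h: "a < ?n" "i < ?n" by auto
    then have "a*?n+i < ?n*?n" by (intro block_index_less)
    then show "id_tensor ?n ?n (PhiTilde N U p) (Pplus ?n) $$ (a*?n+i, a*?n+i)
        = PhiTilde N U p (blk ?n (Pplus ?n) a a) $$ (i,i)"
      using h by (simp add: index_id_tensor(1))
  qed
  also have "\<dots> = (\<Sum>a<?n. 1 / of_nat ?n)"
  proof (intro sum.cong refl)
    fix a assume "a \<in> {..<?n}"
    then have a: "a < ?n" by simp
    have Y: "blk ?n (Pplus ?n) a a \<in> carrier_mat ?n ?n" by simp
    have "(\<Sum>i<?n. PhiTilde N U p (blk ?n (Pplus ?n) a a) $$ (i,i))
       = (\<Sum>i<?n. complex_of_real p * (1 / of_nat ?n) / of_nat ?n)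
           + complex_of_real (1-p) * (\<Sum>i<?n. PhiU N U (blk ?n (Pplus ?n) a a) $$ (i,i))"
      by (simp add: index_PhiTilde mtrace_blk_Pplus[OF a a] sum.distrib sum_distrib_left)
    also have "(\<Sum>i<?n. PhiU N U (blk ?n (Pplus ?n) a a) $$ (i,i)) = 1 / of_nat ?n"
      unfolding trace_PhiU[OF Y] mtrace_blk_Pplus[OF a a] by simp
    also have "(\<Sum>i<?n. complex_of_real p * (1 / of_nat ?n) / of_nat ?n)
        + complex_of_real (1-p) * (1 / of_nat ?n) = 1 / of_nat ?n"
      using n by (simp add: field_simps)
    finally show "(\<Sum>i<?n. PhiTilde N U p (blk ?n (Pplus ?n) a a) $$ (i,i)) = 1 / of_nat ?n" .
  qed
  also have "\<dots> = 1" using n by simp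
  finally show ?thesis .
qed

theorem mainTheorem6:
  fixes N :: nat and U :: "complex mat"
  assumes "N \<ge> 1"
    and "U \<in> carrier_mat (2*N) (2*N)"
    and "U * adj U = 1\<^sub>m (2*N)"
    and "transpose_mat U = - U"
  shows "let p0 = real (4*N) / real (4*N + 1) in
           completely_positive (4*N) (PhiTilde N U p0)
         \<and> (\<forall>p. 0 < p \<and> p < 1 \<and> completely_positive (4*N) (PhiTilde N U p)
             \<longrightarrow> p0 \<le> p)
         \<and> entanglement_breaking (4*N) (PhiTilde N U p0)
         \<and> (let W = (complex_of_real (p0 / real ((4*N)^2))) \<cdot>\<^sub>m 1\<^sub>m ((4*N)*(4*N))
                  + complex_of_real (1 - p0) \<cdot>\<^sub>m id_tensor (4*N) (4*N) (PhiU N U) (Pplus (4*N))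
            in is_state ((4*N)*(4*N)) W \<and> is_separable (4*N) (4*N) W)"
proof -
  let ?n = "4*N" and ?p0 = "real (4*N) / real (4*N + 1)"
  note N = assms(1) and U = assms(2-4)
  note mp = PhiTilde_critical_measure_prepare[OF N U]
  have cp: "completely_positive ?n (PhiTilde N U ?p0)"
    by (rule measure_prepare_completely_positive[OF mp])
  have eb: "entanglement_breaking ?n (PhiTilde N U ?p0)"
    by (rule measure_prepare_entanglement_breaking[OF mp])
  have "psd (?n*?n) (id_tensor ?n ?n (PhiTilde N U ?p0) (Pplus ?n))"
    using cp psd_Pplus unfolding completely_positive_def positive_map_def by blast
  then have state: "is_state (?n*?n) (id_tensor ?n ?n (PhiTilde N U ?p0) (Pplus ?n))"
    unfolding is_state_def using mtrace_PhiTilde_Choi[OF N] by blast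
  have sep: "is_separable ?n ?n (id_tensor ?n ?n (PhiTilde N U ?p0) (Pplus ?n))"
    using eb is_state_Pplus[of ?n] N unfolding entanglement_breaking_def by simp
  show ?thesis
    unfolding Let_def PhiTilde_Choi_eq[OF N]
    using cp eb state sep PhiTilde_completely_positive_imp_critical_le[OF N U] by blast
qed


end
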